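(* Let $\sigma:\mathbb{R}\to\mathbb{R}$ be bounded and differentiable, with derivative that is Lipschitz continuous and bounded. Let $d,r,L,K_n,n\in\mathbb{N}$ with $r\ge 2d$, $c_2>0$, data $(X_1,Y_1),\dots,(X_n,Y_n)\in\mathbb{R}^d\times\mathbb{R}$, and let $\alpha_n\ge1$, $L_n>0$, $t_n\ge L_n$, $\gamma_n^*\ge1$, $B_n\ge1$. Let $\mathbf{w}_1,\mathbf{w}_2,\mathbf{v}$ be weight vectors such that $\max\{|(\mathbf{w}_1)^{(L)}_{1,1,k}|,|(\mathbf{w}_2)^{(L)}_{1,1,k}|\}\le\gamma_n^*$ for $k=1,\dots,K_n$, $\max\{|(\mathbf{w}_1)^{(l)}_{k,i,j}|,|(\mathbf{w}_2)^{(l)}_{k,i,j}|\}\le B_n$ for all $k,i,j$ and $l=1,\dots,L-1$, and \[ \|\mathbf{w}_2-\mathbf{v}\|^2\le 8\cdot\frac{t_n}{L_n}\cdot\max\{F_n(\mathbf{v}),1\}. \] Then \[ \|(\nabla_{\mathbf{w}}F_n)(\mathbf{w}_1)-(\nabla_{\mathbf{w}}F_n)(\mathbf{w}_2)\|\le c_7\cdot\max\{\sqrt{F_n(\mathbf{v})},1\}\cdot(\gamma_n^* )^2\cdot B_n^{3L}\cdot\alpha_n^3\cdot K_n^{3/2}\cdot\sqrt{\frac{t_n}{L_n}}\cdot\|\mathbf{w}_1-\mathbf{w}_2\|, \] where $c_7>0$ is a constant depending only on $\sigma,d,r,L,c_2$.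
   Context: For a weight vector $\mathbf{w}=(w^{(l)}_{k,i,j})$ define $f_{\mathbf{w}}(x)=\sum_{j=1}^{K_n} w^{(L)}_{1,1,j}f^{(L)}_{j,1}(x)$ ($x\in\mathbb{R}^d$), where for $k\in\{1,\dots,K_n\}$, $i\in\{1,\dots,r\}$: $f^{(l)}_{k,i}(x)=\sigma\big(\sum_{j=1}^r w^{(l-1)}_{k,i,j}f^{(l-1)}_{k,j}(x)+w^{(l-1)}_{k,i,0}\big)$ for $l=2,\dots,L$ and $f^{(1)}_{k,i}(x)=\sigma\big(\sum_{j=1}^d w^{(0)}_{k,i,j}x^{(j)}+w^{(0)}_{k,i,0}\big)$. The weight vector consists of all these weights (outer weights $w^{(L)}_{1,1,j}$, $j=1,\dots,K_n$; $w^{(l)}_{k,i,j}$, $1\le l\le L-1$, $j\in\{0,\dots,r\}$; $w^{(0)}_{k,i,j}$, $j\in\{0,\dots,d\}$); $(\mathbf{w})^{(l)}_{k,i,j}$ denotes the corresponding entry of $\mathbf{w}$. Define $F_n(\mathbf{w})=\frac1n\sum_{i=1}^n|f_{\mathbf{w}}(X_i)-Y_i|^2\,1_{[-\alpha_n,\alpha_n]^d}(X_i)+c_2\sum_{j=1}^{K_n}|w^{(L)}_{1,1,j}|^2$. $\|\cdot\|$ denotes the Euclidean norm. *)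

theory Defs
  imports "HOL-Analysis.Analysis"
begin

text \<open>Weight vectors: functions on index tuples (l,k,i,j); only entries in the index set
  nn_index d r L K are meaningful. Inputs x in R^d are functions nat => real with
  components 1..d.\<close>

type_synonym weights = "nat \<times> nat \<times> nat \<times> nat \<Rightarrow> real"

definition nn_index :: "nat \<Rightarrow> nat \<Rightarrow> nat \<Rightarrow> nat \<Rightarrow> (nat \<times> nat \<times> nat \<times> nat) set" where
  "nn_index d r L K =
     {(L, 1, 1, j) | j. j \<in> {1..K}}
   \<union> {(l, k, i, j) | l k i j. l \<in> {1..L-1} \<and> k \<in> {1..K} \<and> i \<in> {1..r} \<and> j \<in> {0..r}}
   \<union> {(0, k, i, j) | k i j. k \<in> {1..K} \<and> i \<in> {1..r} \<and> j \<in> {0..d}}"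

fun nn_layer :: "(real \<Rightarrow> real) \<Rightarrow> nat \<Rightarrow> nat \<Rightarrow> weights \<Rightarrow> (nat \<Rightarrow> real)
                 \<Rightarrow> nat \<Rightarrow> nat \<Rightarrow> nat \<Rightarrow> real" where
  "nn_layer \<sigma> d r w x 0 k i = 0"
| "nn_layer \<sigma> d r w x (Suc 0) k i =
     \<sigma> ((\<Sum>j=1..d. w (0, k, i, j) * x j) + w (0, k, i, 0))"
| "nn_layer \<sigma> d r w x (Suc (Suc l)) k i =
     \<sigma> ((\<Sum>j=1..r. w (Suc l, k, i, j) * nn_layer \<sigma> d r w x (Suc l) k j) + w (Suc l, k, i, 0))"

definition nn_f :: "(real \<Rightarrow> real) \<Rightarrow> nat \<Rightarrow> nat \<Rightarrow> nat \<Rightarrow> nat \<Rightarrow> weights \<Rightarrow> (nat \<Rightarrow> real) \<Rightarrow> real" where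
  "nn_f \<sigma> d r L K w x = (\<Sum>j=1..K. w (L, 1, 1, j) * nn_layer \<sigma> d r w x L j 1)"

definition Fn :: "(real \<Rightarrow> real) \<Rightarrow> nat \<Rightarrow> nat \<Rightarrow> nat \<Rightarrow> nat \<Rightarrow> real \<Rightarrow> nat
                  \<Rightarrow> (nat \<Rightarrow> nat \<Rightarrow> real) \<Rightarrow> (nat \<Rightarrow> real) \<Rightarrow> real \<Rightarrow> weights \<Rightarrow> real" where
  "Fn \<sigma> d r L K c2 n X Y \<alpha> w =
     (1 / real n) * (\<Sum>i=1..n. \<bar>nn_f \<sigma> d r L K w (X i) - Y i\<bar>^2 *
         (if (\<forall>j\<in>{1..d}. \<bar>X i j\<bar> \<le> \<alpha>) then 1 else 0))
     + c2 * (\<Sum>j=1..K. (w (L, 1, 1, j))^2)"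

definition wpartial :: "(weights \<Rightarrow> real) \<Rightarrow> weights \<Rightarrow> nat \<times> nat \<times> nat \<times> nat \<Rightarrow> real" where
  "wpartial F w p = deriv (\<lambda>t. F (w(p := t))) (w p)"

definition wnorm :: "(nat \<times> nat \<times> nat \<times> nat) set \<Rightarrow> weights \<Rightarrow> real" where
  "wnorm I u = sqrt (\<Sum>p\<in>I. (u p)^2)"

end

theory Submission
  imports Defs
begin

text \<open>
  Up to the penalty term, the gradient of F_n at w is the mean over the samples in the cube of
  2 (f_w(X_i) - Y_i) grad f_w(X_i); at w1 and w2 these terms differ by
  (f_w1(X_i) - Y_i) (grad f_w1 - grad f_w2)(X_i) + (f_w1 - f_w2)(X_i) grad f_w2(X_i).
  The network, its gradient and their Lipschitz constants in the weights are estimated layer by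
  layer: for inner weights bounded by B and inputs in [-alpha, alpha]^d, the partial derivatives of
  the inputs of layer m are bounded by C B^m alpha, and the inputs and their partial derivatives are
  Lipschitz in the weights of their own subnetwork with constants C B^m alpha and C B^(2m) alpha^2.
  The residuals f_w1(X_i) - Y_i are compared with those of v, whose mean is at most sqrt (F_n v) by
  the Cauchy-Schwarz inequality, and ||w2 - v|| is controlled by the hypothesis on v.
\<close>

lemma abs_mult_le:
  fixes a b A B :: real
  assumes "\<bar>a\<bar> \<le> A" and "\<bar>b\<bar> \<le> B"
  shows "\<bar>a * b\<bar> \<le> A * B"
  unfolding abs_mult using assms by (intro mult_mono) auto

lemma abs_sum_le:
  fixes f :: "nat \<Rightarrow> real"
  assumes "\<And>j. j \<in> {1..n} \<Longrightarrow> \<bar>f j\<bar> \<le> c"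
  shows "\<bar>\<Sum>j=1..n. f j\<bar> \<le> real n * c"
  using order_trans[OF sum_abs sum_bounded_above[of "{1..n}" "\<lambda>j. \<bar>f j\<bar>" c]] assms by simp

lemma abs_sum_plus_le:
  fixes f :: "nat \<Rightarrow> real"
  assumes "\<And>j. j \<in> {1..n} \<Longrightarrow> \<bar>f j\<bar> \<le> c" and "\<bar>z\<bar> \<le> e"
  shows "\<bar>(\<Sum>j=1..n. f j) + z\<bar> \<le> real n * c + e"
  using abs_sum_le[of n f c] assms abs_triangle_ineq[of "\<Sum>j=1..n. f j" z] by simp

lemma mult_diff_mult: "a1 * b1 - a2 * b2 = (a1 - a2) * b1 + a2 * (b1 - (b2::real))"
  by (simp add: algebra_simps)

lemma one_le_power_mult: "1 \<le> (B::real) \<Longrightarrow> 1 \<le> \<alpha> \<Longrightarrow> 1 \<le> B ^ n * \<alpha>"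
  by (rule mult_ge1_I[OF one_le_power])

lemma power_mult_power_mono:
  fixes B \<alpha> :: real
  assumes "1 \<le> B" "1 \<le> \<alpha>" "m \<le> n" "a \<le> b"
  shows "B ^ m * \<alpha> ^ a \<le> B ^ n * \<alpha> ^ b"
  using assms by (intro mult_mono power_increasing) auto

lemma abs_le_imp_power2_le: "\<bar>a\<bar> \<le> b \<Longrightarrow> a\<^sup>2 \<le> (b::real)\<^sup>2"
  by (meson abs_ge_self order_trans power2_mono)

lemma power2_sum_le: "(a + b)\<^sup>2 \<le> 2 * (a\<^sup>2 + (b::real)\<^sup>2)"
  using zero_le_power2[of "a - b"] by (simp add: power2_eq_square algebra_simps)

lemma power2_le_imp_le_sqrt_max:
  fixes V t F :: real
  assumes "0 \<le> t" and "V\<^sup>2 \<le> 8 * t * max F 1"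
  shows "V \<le> 3 * sqrt t * max (sqrt F) 1"
proof -
  have "V \<le> sqrt (8 * t * max F 1)" using assms(2) by (rule real_le_rsqrt)
  also have "\<dots> = sqrt 8 * sqrt t * max (sqrt F) 1"
    by (simp add: real_sqrt_mult max_def)
  also have "\<dots> \<le> 3 * sqrt t * max (sqrt F) 1"
    using assms(1) by (intro mult_right_mono) (auto intro: real_le_lsqrt)
  finally show ?thesis .
qed

lemma scale_monomials_le:
  fixes \<kappa> \<gamma> B \<alpha> T F :: real and n :: nat
  assumes "1 \<le> \<kappa>" "1 \<le> \<gamma>" "1 \<le> B" "1 \<le> \<alpha>" "1 \<le> T" "1 \<le> F"
  defines "Z \<equiv> F * \<gamma>\<^sup>2 * B ^ (3 * n) * \<alpha> ^ 3 * (\<kappa> * sqrt \<kappa>) * T"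
  shows "\<gamma> * B ^ (2 * n) * \<alpha>\<^sup>2 * (\<kappa> * \<gamma> * T * F) \<le> Z"
    and "\<kappa> * sqrt \<kappa> * (\<gamma> * B ^ n * \<alpha>)\<^sup>2 \<le> Z"
    and "1 \<le> Z"
proof -
  let ?R = "\<gamma> * B ^ n * \<alpha>" and ?Q = "\<gamma> * B ^ (2 * n) * \<alpha>\<^sup>2"
  have "B ^ (3 * n) = B ^ n * B ^ (2 * n)" unfolding power_add[symmetric] by simp
  then have Z: "Z = ?Q * ?R * (\<kappa> * sqrt \<kappa>) * T * F"
    unfolding Z_def power3_eq_cube power2_eq_square by (simp only: mult_ac)
  have Bn: "1 \<le> B ^ n * \<alpha>" by (rule one_le_power_mult[OF assms(3,4)])
  have sqrt: "1 \<le> sqrt \<kappa>" using assms(1) by simp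
  have R: "1 \<le> ?R" using mult_ge1_I[OF assms(2) Bn] by (simp add: mult.assoc)
  have "B ^ n * \<alpha> ^ 1 \<le> B ^ (2 * n) * \<alpha>\<^sup>2"
    using assms(3,4) by (intro power_mult_power_mono) auto
  then have RQ: "?R \<le> ?Q" using assms(2) by (simp add: mult.assoc)
  have \<kappa>: "1 \<le> \<kappa> * sqrt \<kappa>" and TF: "1 \<le> T * F" using mult_ge1_I assms sqrt by simp_all
  have "\<gamma> \<le> \<gamma> * (B ^ n * \<alpha> * sqrt \<kappa>)"
    using mult_ge1_I[OF Bn sqrt] assms(2) by simp
  then have "(?Q * \<kappa> * T * F) * \<gamma> \<le> (?Q * \<kappa> * T * F) * (?R * sqrt \<kappa>)"
    using R RQ assms by (intro mult_left_mono) (simp_all add: mult.assoc)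
  then show "?Q * (\<kappa> * \<gamma> * T * F) \<le> Z" unfolding Z by (simp only: mult_ac)
  have "?R \<le> ?Q * (T * F)" using RQ R TF mult_left_mono[OF TF, of ?Q] by simp
  then have "(\<kappa> * sqrt \<kappa> * ?R) * ?R \<le> (\<kappa> * sqrt \<kappa> * ?R) * (?Q * (T * F))"
    using \<kappa> R by (intro mult_left_mono) simp_all
  then show "\<kappa> * sqrt \<kappa> * ?R\<^sup>2 \<le> Z" unfolding Z power2_eq_square by (simp only: mult_ac)
  have Q: "1 \<le> ?Q" using R RQ by linarith
  show "1 \<le> Z"
    unfolding Z by (intro mult_ge1_I Q R \<kappa> assms(5,6))
qed

lemma L2_set_mult_left: "L2_set (\<lambda>x. c * f x) A = \<bar>c\<bar> * L2_set f A"
proof -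
  have "L2_set (\<lambda>x. c * f x) A = L2_set (\<lambda>x. \<bar>c\<bar> * f x) A"
    by (simp add: L2_set_def power_mult_distrib)
  then show ?thesis by (simp add: L2_set_right_distrib)
qed

lemma L2_set_abs: "L2_set (\<lambda>x. \<bar>f x\<bar>) A = L2_set f A"
  by (simp add: L2_set_def)

lemma L2_set_mono_abs:
  assumes "\<And>x. x \<in> A \<Longrightarrow> \<bar>f x\<bar> \<le> g x"
  shows "L2_set f A \<le> L2_set g A"
  using L2_set_mono[of A "\<lambda>x. \<bar>f x\<bar>" g] assms by (simp add: L2_set_abs)

lemma L2_set_sum_le:
  "finite S \<Longrightarrow> L2_set (\<lambda>x. \<Sum>i\<in>S. f i x) A \<le> (\<Sum>i\<in>S. L2_set (f i) A)"
proof (induction S rule: finite_induct)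
  case (insert a S)
  then show ?case
    using L2_set_triangle_ineq[of "f a" "\<lambda>x. \<Sum>i\<in>S. f i x" A] by simp
qed (simp add: L2_set_def)

lemma L2_set_le_const:
  assumes "\<And>x. x \<in> A \<Longrightarrow> \<bar>f x\<bar> \<le> c"
  shows "L2_set f A \<le> sqrt (real (card A)) * c"
proof -
  have "L2_set f A \<le> L2_set (\<lambda>x. c) A" by (rule L2_set_mono_abs[OF assms])
  also have "\<dots> = sqrt (real (card A)) * c"
  proof (cases "A = {} \<or> infinite A")
    case False
    then have "c \<ge> 0" using assms abs_ge_zero order_trans by blast
    then show ?thesis by (simp add: L2_set_constant)
  qed auto
  finally show ?thesis .
qed

lemma abs_le_L2_set: "finite A \<Longrightarrow> x \<in> A \<Longrightarrow> \<bar>f x\<bar> \<le> L2_set f A"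
  using member_le_L2_set[of A x "\<lambda>x. \<bar>f x\<bar>"] by (simp add: L2_set_abs)

lemma L2_set_power2: "(L2_set f A)\<^sup>2 = (\<Sum>x\<in>A. (f x)\<^sup>2)"
  unfolding L2_set_def by (simp add: sum_nonneg)

lemma mean_le_sqrt_mean_squares:
  fixes f :: "'a \<Rightarrow> real"
  shows "(\<Sum>i\<in>A. f i) / card A \<le> sqrt ((\<Sum>i\<in>A. (f i)\<^sup>2) / card A)"
proof (cases "card A = 0")
  case False
  have "((\<Sum>i\<in>A. f i) / card A)\<^sup>2 \<le> (\<Sum>i\<in>A. (f i)\<^sup>2) / card A"
    using sum_squared_le_sum_of_squares[of f A] False
    by (simp add: divide_simps power2_eq_square)
  then show ?thesis by (rule real_le_rsqrt)
qed simp

lemma wnorm_nonneg: "0 \<le> wnorm I u"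
  by (simp add: wnorm_def sum_nonneg)

section \<open>Layer recursion and partial derivatives\<close>

type_synonym weight_index = "nat \<times> nat \<times> nat \<times> nat"

locale smooth_network =
  fixes \<sigma> :: "real \<Rightarrow> real" and d r L :: nat and M D Lc :: real
  assumes sigma_bounded: "\<And>x. \<bar>\<sigma> x\<bar> \<le> M" and M_ge_1: "1 \<le> M"
    and sigma_deriv: "\<And>x. (\<sigma> has_real_derivative deriv \<sigma> x) (at x)"
    and deriv_bounded: "\<And>x. \<bar>deriv \<sigma> x\<bar> \<le> D" and D_ge_1: "1 \<le> D"
    and deriv_lipschitz: "\<And>x y. \<bar>deriv \<sigma> x - deriv \<sigma> y\<bar> \<le> Lc * \<bar>x - y\<bar>"
    and Lc_nonneg: "0 \<le> Lc"
    and r_pos: "1 \<le> r" and L_pos: "1 \<le> L"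
begin

lemma sigma_lipschitz: "\<bar>\<sigma> a - \<sigma> b\<bar> \<le> D * \<bar>a - b\<bar>"
proof -
  have "\<bar>\<sigma> b - \<sigma> a\<bar> \<le> D * \<bar>b - a\<bar>" if "a < b" for a b
  proof -
    obtain z where "\<sigma> b - \<sigma> a = (b - a) * deriv \<sigma> z"
      using MVT2[OF \<open>a < b\<close> sigma_deriv] by blast
    then show ?thesis
      using deriv_bounded[of z] by (simp add: abs_mult mult_right_mono mult.commute)
  qed
  from this[of a b] this[of b a] show ?thesis
    by (cases a b rule: linorder_cases) (simp_all add: abs_minus_commute)
qed

definition width :: "nat \<Rightarrow> nat" where
  "width m = (if m = 0 then d else r)"

text \<open>
  The weights of level m act on the inputs of layer m + 1, which at level 0 are the data x.
  Thus nn_pre w x m is the pre-activation of layer m + 1, and the first layer needs no special case.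
\<close>

definition nn_input :: "weights \<Rightarrow> (nat \<Rightarrow> real) \<Rightarrow> nat \<Rightarrow> nat \<Rightarrow> nat \<Rightarrow> real" where
  "nn_input w x m k j = (if m = 0 then x j else nn_layer \<sigma> d r w x m k j)"

definition nn_pre :: "weights \<Rightarrow> (nat \<Rightarrow> real) \<Rightarrow> nat \<Rightarrow> nat \<Rightarrow> nat \<Rightarrow> real" where
  "nn_pre w x m k i = (\<Sum>j=1..width m. w (m, k, i, j) * nn_input w x m k j) + w (m, k, i, 0)"

lemma nn_input_Suc: "nn_input w x (Suc m) k i = \<sigma> (nn_pre w x m k i)"
  by (cases m) (simp_all add: nn_input_def nn_pre_def width_def)

lemma nn_f_eq: "nn_f \<sigma> d r L K w x = (\<Sum>k=1..K. w (L, 1, 1, k) * nn_input w x L k 1)"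
  using L_pos by (simp add: nn_f_def nn_input_def)

lemma nn_output_bounded: "\<bar>nn_input w x L k i\<bar> \<le> M"
  using L_pos sigma_bounded by (cases L) (auto simp: nn_input_Suc)

fun nn_input_partial :: "weights \<Rightarrow> weight_index \<Rightarrow> (nat \<Rightarrow> real) \<Rightarrow> nat \<Rightarrow> nat \<Rightarrow> nat \<Rightarrow> real" where
  "nn_input_partial w p x 0 k i = 0"
| "nn_input_partial w p x (Suc m) k i = deriv \<sigma> (nn_pre w x m k i) *
     ((\<Sum>j=1..width m. of_bool (p = (m, k, i, j)) * nn_input w x m k j
                        + w (m, k, i, j) * nn_input_partial w p x m k j) + of_bool (p = (m, k, i, 0)))"

definition nn_pre_partial :: "weights \<Rightarrow> weight_index \<Rightarrow> (nat \<Rightarrow> real) \<Rightarrow> nat \<Rightarrow> nat \<Rightarrow> nat \<Rightarrow> real" where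
  "nn_pre_partial w p x m k i =
     (\<Sum>j=1..width m. of_bool (p = (m, k, i, j)) * nn_input w x m k j
                     + w (m, k, i, j) * nn_input_partial w p x m k j) + of_bool (p = (m, k, i, 0))"

lemma nn_input_partial_Suc:
  "nn_input_partial w p x (Suc m) k i = deriv \<sigma> (nn_pre w x m k i) * nn_pre_partial w p x m k i"
  by (simp add: nn_pre_partial_def)

declare nn_input_partial.simps(2) [simp del]

lemma has_derivative_upd: "((\<lambda>t. (w(p := t)) q) has_real_derivative of_bool (p = q)) (at s)"
  by (cases "p = q") auto

lemma has_derivative_nn_input:
  "((\<lambda>t. nn_input (w(p := t)) x m k i) has_real_derivative nn_input_partial w p x m k i) (at (w p))"
proof (induction m arbitrary: i)
  case 0
  then show ?case by (simp add: nn_input_def)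
next
  case (Suc m)
  have "((\<lambda>t. nn_pre (w(p := t)) x m k i) has_real_derivative nn_pre_partial w p x m k i) (at (w p))"
    unfolding nn_pre_def nn_pre_partial_def
    by (intro DERIV_cong[OF DERIV_add[OF DERIV_sum[OF DERIV_mult[OF has_derivative_upd Suc.IH]]
          has_derivative_upd]]) (simp add: mult.commute)
  from DERIV_chain'[OF this sigma_deriv] show ?case
    unfolding nn_input_Suc nn_input_partial_Suc by (simp only: fun_upd_triv mult.commute)
qed

lemma nn_input_partial_eq_0: "m \<le> fst p \<or> fst (snd p) \<noteq> k \<Longrightarrow> nn_input_partial w p x m k j = 0"
proof (induction m arbitrary: j)
  case (Suc m)
  then have "p \<noteq> (m, k, j, i)" for i by auto
  moreover have "nn_input_partial w p x m k i = 0" for i using Suc by auto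
  ultimately show ?case by (simp add: nn_input_partial_Suc nn_pre_partial_def)
qed simp

definition nn_f_partial :: "nat \<Rightarrow> weights \<Rightarrow> weight_index \<Rightarrow> (nat \<Rightarrow> real) \<Rightarrow> real" where
  "nn_f_partial K w p x = (\<Sum>k=1..K. of_bool (p = (L, 1, 1, k)) * nn_input w x L k 1
                              + w (L, 1, 1, k) * nn_input_partial w p x L k 1)"

lemma has_derivative_nn_f:
  "((\<lambda>t. nn_f \<sigma> d r L K (w(p := t)) x) has_real_derivative nn_f_partial K w p x) (at (w p))"
  unfolding nn_f_eq nn_f_partial_def
  by (intro DERIV_cong[OF DERIV_sum[OF DERIV_mult[OF has_derivative_upd has_derivative_nn_input]]])
    (simp add: mult.commute)

lemma nn_f_partial_outer:
  assumes "k \<in> {1..K}"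
  shows "nn_f_partial K w (L, 1, 1, k) x = nn_input w x L k 1"
proof -
  have "nn_f_partial K w (L, 1, 1, k) x = (\<Sum>k'=1..K. if k' = k then nn_input w x L k 1 else 0)"
    unfolding nn_f_partial_def by (intro sum.cong) (auto simp: nn_input_partial_eq_0)
  with assms show ?thesis by simp
qed

lemma nn_f_partial_inner:
  assumes "k \<in> {1..K}" and "l < L"
  shows "nn_f_partial K w (l, k, i, j) x = w (L, 1, 1, k) * nn_input_partial w (l, k, i, j) x L k 1"
proof -
  have "nn_f_partial K w (l, k, i, j) x
      = (\<Sum>k'=1..K. if k' = k then w (L, 1, 1, k) * nn_input_partial w (l, k, i, j) x L k 1 else 0)"
    unfolding nn_f_partial_def using assms(2) by (intro sum.cong) (auto simp: nn_input_partial_eq_0)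
  with assms(1) show ?thesis by simp
qed

definition in_cube :: "real \<Rightarrow> (nat \<Rightarrow> real) \<Rightarrow> bool" where
  "in_cube \<alpha> x \<longleftrightarrow> (\<forall>j\<in>{1..d}. \<bar>x j\<bar> \<le> \<alpha>)"

definition Fn_grad :: "nat \<Rightarrow> real \<Rightarrow> nat \<Rightarrow> (nat \<Rightarrow> nat \<Rightarrow> real) \<Rightarrow> (nat \<Rightarrow> real) \<Rightarrow> real \<Rightarrow> weights
    \<Rightarrow> weight_index \<Rightarrow> real" where
  "Fn_grad K c2 n X Y \<alpha> w p =
     (1 / real n) * (\<Sum>i=1..n. 2 * (nn_f \<sigma> d r L K w (X i) - Y i) * nn_f_partial K w p (X i)
                                 * of_bool (in_cube \<alpha> (X i)))
     + 2 * c2 * (\<Sum>j=1..K. of_bool (p = (L, 1, 1, j)) * w (L, 1, 1, j))"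

lemma has_derivative_Fn:
  "((\<lambda>t. Fn \<sigma> d r L K c2 n X Y \<alpha> (w(p := t))) has_real_derivative Fn_grad K c2 n X Y \<alpha> w p)
     (at (w p))"
  unfolding Fn_def Fn_grad_def power2_abs unfolding power2_eq_square
  by (intro DERIV_cong[OF DERIV_add[OF DERIV_cmult[OF DERIV_sum[OF DERIV_cmult_right[OF
          DERIV_mult[OF DERIV_diff[OF has_derivative_nn_f DERIV_const]
                        DERIV_diff[OF has_derivative_nn_f DERIV_const]]]]]
        DERIV_cmult[OF DERIV_sum[OF DERIV_mult[OF has_derivative_upd has_derivative_upd]]]]])
    (simp add: in_cube_def of_bool_def sum_distrib_left algebra_simps)

lemma wpartial_Fn: "wpartial (Fn \<sigma> d r L K c2 n X Y \<alpha>) w p = Fn_grad K c2 n X Y \<alpha> w p"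
  unfolding wpartial_def by (rule DERIV_imp_deriv[OF has_derivative_Fn])

section \<open>Layerwise bounds and Lipschitz estimates\<close>

definition subnet_index :: "(nat \<times> nat \<times> nat) set" where
  "subnet_index = (SIGMA l:{..<L}. {1..r} \<times> {0..width l})"

lemma subnet_index_level: "(l, i, j) \<in> subnet_index \<Longrightarrow> l < L"
  by (simp add: subnet_index_def)

lemma one_in_width_L: "1 \<in> {1..width L}"
  using r_pos L_pos by (simp add: width_def)

definition inner_bounded :: "real \<Rightarrow> nat \<Rightarrow> weights \<Rightarrow> bool" where
  "inner_bounded B k w \<longleftrightarrow> (\<forall>l\<in>{1..L-1}. \<forall>i\<in>{1..r}. \<forall>j\<in>{0..r}. \<bar>w (l, k, i, j)\<bar> \<le> B)"

lemma inner_boundedD: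
  "inner_bounded B k w \<Longrightarrow> 0 < m \<Longrightarrow> Suc m \<le> L \<Longrightarrow> i \<in> {1..r} \<Longrightarrow> j \<le> width m
    \<Longrightarrow> \<bar>w (m, k, i, j)\<bar> \<le> B"
  by (auto simp: inner_bounded_def width_def)

text \<open>
  input_const m bounds the partial derivatives of the inputs of layer m and is also their
  Lipschitz constant in the weights, since both estimates obey the same recursion.
\<close>

fun input_const :: "nat \<Rightarrow> real" where
  "input_const 0 = 0"
| "input_const (Suc m) = D * (real (width m) * (M + input_const m) + 1)"

definition pre_const :: "nat \<Rightarrow> real" where
  "pre_const m = real (width m) * (M + input_const m) + 1"

lemma input_const_Suc: "input_const (Suc m) = D * pre_const m"
  by (simp add: pre_const_def)

lemma input_const_nonneg: "0 \<le> input_const m"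
  using M_ge_1 D_ge_1 by (induction m) auto

declare input_const.simps(2) [simp del]

lemma nn_input_bounded:
  assumes "1 \<le> \<alpha>" and "in_cube \<alpha> x" and "j \<in> {1..width m}"
  shows "\<bar>nn_input w x m k j\<bar> \<le> M * \<alpha>"
proof (cases m)
  case 0
  then have "\<bar>x j\<bar> \<le> \<alpha>" using assms(2,3) by (simp add: in_cube_def width_def)
  moreover have "\<alpha> \<le> M * \<alpha>" using M_ge_1 assms(1) by simp
  ultimately show ?thesis using 0 by (simp add: nn_input_def)
next
  case (Suc m')
  have "M \<le> M * \<alpha>" using M_ge_1 assms(1) by simp
  then show ?thesis using Suc sigma_bounded[of "nn_pre w x m' k j"] by (simp add: nn_input_Suc)
qed

context
  fixes B \<alpha> :: real and k :: nat and w :: weights and x :: "nat \<Rightarrow> real"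
  assumes B: "1 \<le> B" and \<alpha>: "1 \<le> \<alpha>" and bounded: "inner_bounded B k w" and x: "in_cube \<alpha> x"
begin

lemma nn_pre_partial_bounded_step:
  assumes m: "Suc m \<le> L" and i: "i \<in> {1..r}"
    and partial_below: "\<And>j. j \<in> {1..width m} \<Longrightarrow> \<bar>nn_input_partial w p x m k j\<bar> \<le> input_const m * B ^ m * \<alpha>"
  shows "\<bar>nn_pre_partial w p x m k i\<bar> \<le> pre_const m * B ^ Suc m * \<alpha>"
proof -
  let ?P = "B ^ Suc m * \<alpha>"
  have P: "1 \<le> ?P" by (rule one_le_power_mult[OF B \<alpha>])
  have "\<bar>of_bool (p = (m, k, i, j)) * nn_input w x m k j + w (m, k, i, j) * nn_input_partial w p x m k j\<bar>
      \<le> (M + input_const m) * ?P" if j: "j \<in> {1..width m}" for j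
  proof -
    have "\<bar>of_bool (p = (m, k, i, j)) * nn_input w x m k j\<bar> \<le> 1 * (M * \<alpha>)"
      by (rule abs_mult_le) (use nn_input_bounded[OF \<alpha> x j] in auto)
    also have "\<dots> \<le> M * ?P"
      using M_ge_1 \<alpha> one_le_power[OF B, of "Suc m"] by (simp add: mult_left_mono mult_right_mono)
    finally have input: "\<bar>of_bool (p = (m, k, i, j)) * nn_input w x m k j\<bar> \<le> M * ?P" .
    have "\<bar>w (m, k, i, j) * nn_input_partial w p x m k j\<bar> \<le> B * (input_const m * B ^ m * \<alpha>)"
    proof (cases m)
      case 0
      then show ?thesis using B \<alpha> input_const_nonneg[of 0] by simp
    next
      case (Suc m')
      then show ?thesis
        using j by (intro abs_mult_le inner_boundedD[OF bounded _ m i] partial_below) auto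
    qed
    then have "\<bar>w (m, k, i, j) * nn_input_partial w p x m k j\<bar> \<le> input_const m * ?P"
      by (simp add: mult_ac)
    with input show ?thesis
      by (intro order_trans[OF abs_triangle_ineq]) (simp add: distrib_right)
  qed
  moreover have "\<bar>of_bool (p = (m, k, i, 0)) :: real\<bar> \<le> ?P"
    using P by (simp del: power_Suc)
  ultimately have "\<bar>nn_pre_partial w p x m k i\<bar> \<le> real (width m) * ((M + input_const m) * ?P) + ?P"
    unfolding nn_pre_partial_def by (rule abs_sum_plus_le)
  then show ?thesis by (simp add: pre_const_def algebra_simps)
qed

lemma nn_input_partial_bounded:
  "m \<le> L \<Longrightarrow> j \<in> {1..width m} \<Longrightarrow> \<bar>nn_input_partial w p x m k j\<bar> \<le> input_const m * B ^ m * \<alpha>"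
proof (induction m arbitrary: j)
  case (Suc m)
  have "j \<in> {1..r}" using Suc.prems(2) by (simp add: width_def)
  then have "\<bar>nn_pre_partial w p x m k j\<bar> \<le> pre_const m * B ^ Suc m * \<alpha>"
    using Suc.prems(1) by (intro nn_pre_partial_bounded_step Suc.IH) auto
  then have "\<bar>nn_input_partial w p x (Suc m) k j\<bar> \<le> D * (pre_const m * B ^ Suc m * \<alpha>)"
    unfolding nn_input_partial_Suc by (rule abs_mult_le[OF deriv_bounded])
  then show ?case by (simp add: input_const_Suc mult_ac)
qed simp

lemma nn_pre_partial_bounded:
  "Suc m \<le> L \<Longrightarrow> i \<in> {1..r} \<Longrightarrow> \<bar>nn_pre_partial w p x m k i\<bar> \<le> pre_const m * B ^ Suc m * \<alpha>"
  by (intro nn_pre_partial_bounded_step nn_input_partial_bounded) auto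

end

fun input_partial_lip_const :: "nat \<Rightarrow> real" where
  "input_partial_lip_const 0 = 0"
| "input_partial_lip_const (Suc m) =
     Lc * (pre_const m)\<^sup>2 + D * (real (width m) * (2 * input_const m + input_partial_lip_const m))"

definition pre_partial_lip_const :: "nat \<Rightarrow> real" where
  "pre_partial_lip_const m = real (width m) * (2 * input_const m + input_partial_lip_const m)"

lemma input_partial_lip_const_Suc:
  "input_partial_lip_const (Suc m) = Lc * (pre_const m)\<^sup>2 + D * pre_partial_lip_const m"
  by (simp add: pre_partial_lip_const_def)

lemma input_partial_lip_const_nonneg: "0 \<le> input_partial_lip_const m"
  using Lc_nonneg D_ge_1 input_const_nonneg by (induction m) auto

declare input_partial_lip_const.simps(2) [simp del]

context
  fixes B \<alpha> \<delta> :: real and k :: nat and w1 w2 :: weights and x :: "nat \<Rightarrow> real"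
  assumes B: "1 \<le> B" and \<alpha>: "1 \<le> \<alpha>"
    and bounded1: "inner_bounded B k w1" and bounded2: "inner_bounded B k w2" and x: "in_cube \<alpha> x"
    and close: "\<And>l i j. (l, i, j) \<in> subnet_index \<Longrightarrow> \<bar>w1 (l, k, i, j) - w2 (l, k, i, j)\<bar> \<le> \<delta>"
begin

lemma closeD: "m < L \<Longrightarrow> i \<in> {1..r} \<Longrightarrow> j \<le> width m \<Longrightarrow> \<bar>w1 (m, k, i, j) - w2 (m, k, i, j)\<bar> \<le> \<delta>"
  by (rule close) (simp add: subnet_index_def)

lemma close_nonneg: "0 \<le> \<delta>"
  using closeD[of 0 1 0] L_pos r_pos by simp

lemma nn_pre_lipschitz_step:
  assumes m: "Suc m \<le> L" and i: "i \<in> {1..r}"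
    and input_below: "\<And>j. j \<in> {1..width m} \<Longrightarrow>
      \<bar>nn_input w1 x m k j - nn_input w2 x m k j\<bar> \<le> input_const m * B ^ m * \<alpha> * \<delta>"
  shows "\<bar>nn_pre w1 x m k i - nn_pre w2 x m k i\<bar> \<le> pre_const m * B ^ Suc m * \<alpha> * \<delta>"
proof -
  let ?P = "B ^ Suc m * \<alpha> * \<delta>"
  have P: "\<delta> \<le> ?P"
    using close_nonneg one_le_power_mult[OF B \<alpha>, of "Suc m"] by (simp add: mult_le_cancel_right1)
  have "\<bar>w1 (m, k, i, j) * nn_input w1 x m k j - w2 (m, k, i, j) * nn_input w2 x m k j\<bar>
      \<le> (M + input_const m) * ?P" if j: "j \<in> {1..width m}" for j
  proof -
    have "\<bar>(w1 (m, k, i, j) - w2 (m, k, i, j)) * nn_input w1 x m k j\<bar> \<le> \<delta> * (M * \<alpha>)"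
      using i j m by (intro abs_mult_le closeD nn_input_bounded[OF \<alpha> x]) auto
    also have "\<dots> \<le> M * ?P"
      using mult_right_mono[OF one_le_power[OF B, of "Suc m"], of "\<alpha> * \<delta>"] close_nonneg \<alpha> M_ge_1
      by (simp add: mult_left_mono mult_ac)
    finally have weight: "\<bar>(w1 (m, k, i, j) - w2 (m, k, i, j)) * nn_input w1 x m k j\<bar> \<le> M * ?P" .
    have "\<bar>w2 (m, k, i, j) * (nn_input w1 x m k j - nn_input w2 x m k j)\<bar>
        \<le> B * (input_const m * B ^ m * \<alpha> * \<delta>)"
    proof (cases m)
      case 0
      then show ?thesis
        using B \<alpha> close_nonneg input_const_nonneg[of 0] by (simp add: nn_input_def)
    next
      case (Suc m')
      then show ?thesis
        using j by (intro abs_mult_le inner_boundedD[OF bounded2 _ m i] input_below) auto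
    qed
    then have "\<bar>w2 (m, k, i, j) * (nn_input w1 x m k j - nn_input w2 x m k j)\<bar> \<le> input_const m * ?P"
      by (simp add: mult_ac)
    with weight show ?thesis
      unfolding mult_diff_mult by (intro order_trans[OF abs_triangle_ineq]) (simp add: distrib_right)
  qed
  moreover have "\<bar>w1 (m, k, i, 0) - w2 (m, k, i, 0)\<bar> \<le> ?P"
    using m i by (intro order_trans[OF closeD P]) auto
  ultimately have "\<bar>(\<Sum>j=1..width m. w1 (m, k, i, j) * nn_input w1 x m k j - w2 (m, k, i, j) * nn_input w2 x m k j)
      + (w1 (m, k, i, 0) - w2 (m, k, i, 0))\<bar> \<le> real (width m) * ((M + input_const m) * ?P) + ?P"
    by (rule abs_sum_plus_le)
  then show ?thesis
    by (simp add: nn_pre_def sum_subtractf pre_const_def algebra_simps)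
qed

lemma nn_input_lipschitz:
  "m \<le> L \<Longrightarrow> j \<in> {1..width m} \<Longrightarrow>
    \<bar>nn_input w1 x m k j - nn_input w2 x m k j\<bar> \<le> input_const m * B ^ m * \<alpha> * \<delta>"
proof (induction m arbitrary: j)
  case 0
  then show ?case by (simp add: nn_input_def)
next
  case (Suc m)
  have "j \<in> {1..r}" using Suc.prems(2) by (simp add: width_def)
  then have "\<bar>nn_pre w1 x m k j - nn_pre w2 x m k j\<bar> \<le> pre_const m * B ^ Suc m * \<alpha> * \<delta>"
    using Suc.prems(1) by (intro nn_pre_lipschitz_step Suc.IH) auto
  then have "\<bar>nn_input w1 x (Suc m) k j - nn_input w2 x (Suc m) k j\<bar> \<le> D * (pre_const m * B ^ Suc m * \<alpha> * \<delta>)"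
    unfolding nn_input_Suc using D_ge_1 by (intro order_trans[OF sigma_lipschitz]) simp
  then show ?case by (simp add: input_const_Suc mult_ac)
qed

lemma nn_pre_lipschitz:
  "Suc m \<le> L \<Longrightarrow> i \<in> {1..r} \<Longrightarrow>
    \<bar>nn_pre w1 x m k i - nn_pre w2 x m k i\<bar> \<le> pre_const m * B ^ Suc m * \<alpha> * \<delta>"
  by (intro nn_pre_lipschitz_step nn_input_lipschitz) auto

lemma nn_pre_partial_term_lipschitz:
  assumes m: "Suc m \<le> L" and i: "i \<in> {1..r}" and j: "j \<in> {1..width m}"
    and partial_below: "\<bar>nn_input_partial w1 p x m k j - nn_input_partial w2 p x m k j\<bar>
      \<le> input_partial_lip_const m * B ^ (2 * m) * \<alpha>\<^sup>2 * \<delta>"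
  shows "\<bar>of_bool (p = (m, k, i, j)) * (nn_input w1 x m k j - nn_input w2 x m k j)
        + ((w1 (m, k, i, j) - w2 (m, k, i, j)) * nn_input_partial w1 p x m k j
           + w2 (m, k, i, j) * (nn_input_partial w1 p x m k j - nn_input_partial w2 p x m k j))\<bar>
    \<le> (2 * input_const m + input_partial_lip_const m) * (B ^ (2 * Suc m) * \<alpha>\<^sup>2 * \<delta>)"
proof -
  let ?P = "B ^ (2 * Suc m) * \<alpha>\<^sup>2 * \<delta>"
  have "B ^ m * \<alpha> ^ 1 \<le> B ^ (2 * Suc m) * \<alpha>\<^sup>2" "B ^ Suc (2 * m) * \<alpha>\<^sup>2 \<le> B ^ (2 * Suc m) * \<alpha>\<^sup>2"
    by (intro power_mult_power_mono[OF B \<alpha>]; simp)+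
  from mult_right_mono[OF this(1) close_nonneg] mult_right_mono[OF this(2) close_nonneg]
  have low: "B ^ m * \<alpha> * \<delta> \<le> ?P" and high: "B * (B ^ (2 * m) * \<alpha>\<^sup>2 * \<delta>) \<le> ?P"
    by (simp_all add: mult.assoc)
  have "\<bar>of_bool (p = (m, k, i, j)) * (nn_input w1 x m k j - nn_input w2 x m k j)\<bar>
      \<le> 1 * (input_const m * B ^ m * \<alpha> * \<delta>)"
    using m j by (intro abs_mult_le nn_input_lipschitz) auto
  also have "\<dots> \<le> input_const m * ?P"
    using mult_left_mono[OF low input_const_nonneg] by (simp add: mult_ac)
  finally have inputs: "\<bar>of_bool (p = (m, k, i, j)) * (nn_input w1 x m k j - nn_input w2 x m k j)\<bar>
      \<le> input_const m * ?P" .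
  have "\<bar>(w1 (m, k, i, j) - w2 (m, k, i, j)) * nn_input_partial w1 p x m k j\<bar>
      \<le> \<delta> * (input_const m * B ^ m * \<alpha>)"
    using m i j by (intro abs_mult_le closeD nn_input_partial_bounded[OF B \<alpha> bounded1 x]) auto
  also have "\<dots> \<le> input_const m * ?P"
    using mult_left_mono[OF low input_const_nonneg] by (simp add: mult_ac)
  finally have weights: "\<bar>(w1 (m, k, i, j) - w2 (m, k, i, j)) * nn_input_partial w1 p x m k j\<bar>
      \<le> input_const m * ?P" .
  have "\<bar>w2 (m, k, i, j) * (nn_input_partial w1 p x m k j - nn_input_partial w2 p x m k j)\<bar>
      \<le> B * (input_partial_lip_const m * B ^ (2 * m) * \<alpha>\<^sup>2 * \<delta>)"
  proof (cases m)
    case 0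
    then show ?thesis using B close_nonneg by simp
  next
    case (Suc m')
    then show ?thesis
      using j by (intro abs_mult_le inner_boundedD[OF bounded2 _ m i] partial_below) auto
  qed
  also have "\<dots> \<le> input_partial_lip_const m * ?P"
    using high input_partial_lip_const_nonneg mult_left_mono by (fastforce simp: mult_ac)
  finally have partial_diff: "\<bar>w2 (m, k, i, j) * (nn_input_partial w1 p x m k j - nn_input_partial w2 p x m k j)\<bar>
      \<le> input_partial_lip_const m * ?P" .
  have "\<bar>of_bool (p = (m, k, i, j)) * (nn_input w1 x m k j - nn_input w2 x m k j)
      + ((w1 (m, k, i, j) - w2 (m, k, i, j)) * nn_input_partial w1 p x m k j
         + w2 (m, k, i, j) * (nn_input_partial w1 p x m k j - nn_input_partial w2 p x m k j))\<bar>
    \<le> input_const m * ?P + (input_const m * ?P + input_partial_lip_const m * ?P)"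
    using inputs weights partial_diff
    by (intro order_trans[OF abs_triangle_ineq] add_mono order_trans[OF abs_triangle_ineq])
  also have "\<dots> = (2 * input_const m + input_partial_lip_const m) * ?P"
    by (simp add: algebra_simps)
  finally show ?thesis .
qed

lemma nn_pre_partial_lipschitz_step:
  assumes m: "Suc m \<le> L" and i: "i \<in> {1..r}"
    and partial_below: "\<And>j. j \<in> {1..width m} \<Longrightarrow>
      \<bar>nn_input_partial w1 p x m k j - nn_input_partial w2 p x m k j\<bar> \<le> input_partial_lip_const m * B ^ (2 * m) * \<alpha>\<^sup>2 * \<delta>"
  shows "\<bar>nn_pre_partial w1 p x m k i - nn_pre_partial w2 p x m k i\<bar> \<le> pre_partial_lip_const m * B ^ (2 * Suc m) * \<alpha>\<^sup>2 * \<delta>"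
proof -
  have "\<bar>\<Sum>j=1..width m. of_bool (p = (m, k, i, j)) * (nn_input w1 x m k j - nn_input w2 x m k j)
        + ((w1 (m, k, i, j) - w2 (m, k, i, j)) * nn_input_partial w1 p x m k j
           + w2 (m, k, i, j) * (nn_input_partial w1 p x m k j - nn_input_partial w2 p x m k j))\<bar>
      \<le> real (width m) * ((2 * input_const m + input_partial_lip_const m) * (B ^ (2 * Suc m) * \<alpha>\<^sup>2 * \<delta>))"
    using m i partial_below by (intro abs_sum_le nn_pre_partial_term_lipschitz) auto
  moreover have "nn_pre_partial w1 p x m k i - nn_pre_partial w2 p x m k i =
      (\<Sum>j=1..width m. of_bool (p = (m, k, i, j)) * (nn_input w1 x m k j - nn_input w2 x m k j)
        + ((w1 (m, k, i, j) - w2 (m, k, i, j)) * nn_input_partial w1 p x m k j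
           + w2 (m, k, i, j) * (nn_input_partial w1 p x m k j - nn_input_partial w2 p x m k j)))"
    unfolding nn_pre_partial_def by (simp add: sum_subtractf[symmetric] algebra_simps)
  ultimately show ?thesis by (simp add: pre_partial_lip_const_def mult_ac)
qed

lemma nn_input_partial_lipschitz:
  "m \<le> L \<Longrightarrow> j \<in> {1..width m} \<Longrightarrow>
    \<bar>nn_input_partial w1 p x m k j - nn_input_partial w2 p x m k j\<bar> \<le> input_partial_lip_const m * B ^ (2 * m) * \<alpha>\<^sup>2 * \<delta>"
proof (induction m arbitrary: j)
  case (Suc m)
  let ?P = "B ^ (2 * Suc m) * \<alpha>\<^sup>2 * \<delta>"
  have j: "j \<in> {1..r}" using Suc.prems(2) by (simp add: width_def)
  have "\<bar>deriv \<sigma> (nn_pre w1 x m k j) - deriv \<sigma> (nn_pre w2 x m k j)\<bar> \<le> Lc * (pre_const m * B ^ Suc m * \<alpha> * \<delta>)"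
    using Suc.prems(1) j Lc_nonneg
    by (intro order_trans[OF deriv_lipschitz] mult_left_mono nn_pre_lipschitz) auto
  moreover have "\<bar>nn_pre_partial w1 p x m k j\<bar> \<le> pre_const m * B ^ Suc m * \<alpha>"
    using Suc.prems(1) j by (intro nn_pre_partial_bounded[OF B \<alpha> bounded1 x])
  ultimately have derivs: "\<bar>(deriv \<sigma> (nn_pre w1 x m k j) - deriv \<sigma> (nn_pre w2 x m k j)) * nn_pre_partial w1 p x m k j\<bar>
      \<le> Lc * (pre_const m)\<^sup>2 * ?P"
    by (rule order_trans[OF abs_mult_le])
      (simp_all only: power2_eq_square mult_2 power_add, simp_all add: mult_ac)
  have "\<bar>nn_pre_partial w1 p x m k j - nn_pre_partial w2 p x m k j\<bar> \<le> pre_partial_lip_const m * B ^ (2 * Suc m) * \<alpha>\<^sup>2 * \<delta>"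
    using Suc.prems(1) j by (intro nn_pre_partial_lipschitz_step Suc.IH) auto
  then have pre_partials: "\<bar>deriv \<sigma> (nn_pre w2 x m k j) * (nn_pre_partial w1 p x m k j - nn_pre_partial w2 p x m k j)\<bar>
      \<le> D * (pre_partial_lip_const m * B ^ (2 * Suc m) * \<alpha>\<^sup>2 * \<delta>)"
    by (rule abs_mult_le[OF deriv_bounded])
  show ?case
    unfolding nn_input_partial_Suc mult_diff_mult input_partial_lip_const_Suc
    using order_trans[OF abs_triangle_ineq add_mono[OF derivs pre_partials]] by (simp add: algebra_simps)
qed simp

end

lemma nn_index_eq:
  "nn_index d r L K = (\<lambda>k. (L, 1, 1, k)) ` {1..K} \<union> (\<lambda>(k, l, i, j). (l, k, i, j)) ` ({1..K} \<times> subnet_index)"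
  using L_pos
  by (auto simp: nn_index_def subnet_index_def width_def image_iff split: if_splits)

lemma finite_subnet_index: "finite subnet_index"
  by (simp add: subnet_index_def)

lemma sum_nn_index:
  "(\<Sum>p\<in>nn_index d r L K. \<phi> p) = (\<Sum>k=1..K. \<phi> (L, 1, 1, k) + (\<Sum>(l, i, j)\<in>subnet_index. \<phi> (l, k, i, j)))"
proof -
  let ?O = "(\<lambda>k. (L, 1, 1, k)) ` {1..K}"
  let ?I = "(\<lambda>(k, l, i, j). (l, k, i, j)) ` ({1..K} \<times> subnet_index)"
  have disjoint: "?O \<inter> ?I = {}" using L_pos by (auto simp: subnet_index_def)
  have "inj_on (\<lambda>k. (L, 1::nat, 1::nat, k)) {1..K}" "inj_on (\<lambda>(k, l, i, j). (l, k, i, j)) ({1..K} \<times> subnet_index)"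
    by (auto simp: inj_on_def)
  then have "(\<Sum>p\<in>nn_index d r L K. \<phi> p)
      = (\<Sum>k=1..K. \<phi> (L, 1, 1, k)) + (\<Sum>(k, l, i, j)\<in>{1..K} \<times> subnet_index. \<phi> (l, k, i, j))"
    unfolding nn_index_eq using disjoint finite_subnet_index
    by (simp add: sum.union_disjoint sum.reindex case_prod_beta')
  also have "\<dots> = (\<Sum>k=1..K. \<phi> (L, 1, 1, k)) + (\<Sum>k=1..K. \<Sum>(l, i, j)\<in>subnet_index. \<phi> (l, k, i, j))"
    by (simp add: sum.cartesian_product case_prod_beta')
  finally show ?thesis by (simp add: sum.distrib)
qed

lemma card_nn_index: "card (nn_index d r L K) = K * (1 + card subnet_index)"
  unfolding card_eq_sum[of "nn_index d r L K"] sum_nn_index by (simp add: card_eq_sum[symmetric])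

definition subnet_dist :: "nat \<Rightarrow> weights \<Rightarrow> real" where
  "subnet_dist k u = L2_set (\<lambda>(l, i, j). u (l, k, i, j)) subnet_index"

lemma subnet_dist_nonneg: "0 \<le> subnet_dist k u"
  by (simp add: subnet_dist_def)

lemma abs_le_subnet_dist: "(l, i, j) \<in> subnet_index \<Longrightarrow> \<bar>u (l, k, i, j)\<bar> \<le> subnet_dist k u"
  unfolding subnet_dist_def
  using abs_le_L2_set[OF finite_subnet_index, of "(l, i, j)" "\<lambda>(l, i, j). u (l, k, i, j)"] by simp

lemma abs_diff_le_subnet_dist: "(l, i, j) \<in> subnet_index \<Longrightarrow>
    \<bar>w1 (l, k, i, j) - w2 (l, k, i, j)\<bar> \<le> subnet_dist k (\<lambda>p. w1 p - w2 p)"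
  using abs_le_subnet_dist[of l i j "\<lambda>p. w1 p - w2 p" k] by simp

lemma wnorm_power2:
  "(wnorm (nn_index d r L K) u)\<^sup>2 = (\<Sum>k=1..K. (u (L, 1, 1, k))\<^sup>2 + (subnet_dist k u)\<^sup>2)"
  unfolding wnorm_def subnet_dist_def L2_set_power2
  by (simp add: sum_nonneg sum_nn_index case_prod_beta')

lemma outer_subnet_le_wnorm:
  assumes "k \<in> {1..K}"
  shows "(u (L, 1, 1, k))\<^sup>2 + (subnet_dist k u)\<^sup>2 \<le> (wnorm (nn_index d r L K) u)\<^sup>2"
  unfolding wnorm_power2 by (rule member_le_sum[OF assms]) simp_all

lemma outer_le_wnorm:
  assumes "k \<in> {1..K}"
  shows "\<bar>u (L, 1, 1, k)\<bar> \<le> wnorm (nn_index d r L K) u"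
proof -
  have "(u (L, 1, 1, k))\<^sup>2 \<le> (wnorm (nn_index d r L K) u)\<^sup>2"
    using outer_subnet_le_wnorm[OF assms, of u] zero_le_power2[of "subnet_dist k u"] by linarith
  then have "\<bar>u (L, 1, 1, k)\<bar>\<^sup>2 \<le> (wnorm (nn_index d r L K) u)\<^sup>2" by simp
  then show ?thesis by (rule power2_le_imp_le[OF _ wnorm_nonneg])
qed

lemma subnet_dist_le_wnorm:
  assumes "k \<in> {1..K}"
  shows "subnet_dist k u \<le> wnorm (nn_index d r L K) u"
proof -
  have "(subnet_dist k u)\<^sup>2 \<le> (wnorm (nn_index d r L K) u)\<^sup>2"
    using outer_subnet_le_wnorm[OF assms, of u] zero_le_power2[of "u (L, 1, 1, k)"] by linarith
  then show ?thesis by (rule power2_le_imp_le[OF _ wnorm_nonneg])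
qed

lemma L2_set_nn_index_le:
  assumes c: "0 \<le> c"
    and outer: "\<And>k. k \<in> {1..K} \<Longrightarrow> \<bar>g (L, 1, 1, k)\<bar> \<le> c * (\<bar>u (L, 1, 1, k)\<bar> + subnet_dist k u)"
    and inner: "\<And>k l i j. k \<in> {1..K} \<Longrightarrow> (l, i, j) \<in> subnet_index \<Longrightarrow>
      \<bar>g (l, k, i, j)\<bar> \<le> c * (\<bar>u (L, 1, 1, k)\<bar> + subnet_dist k u)"
  shows "L2_set g (nn_index d r L K) \<le> sqrt (2 * (1 + real (card subnet_index))) * c * wnorm (nn_index d r L K) u"
proof -
  define N where "N = 1 + real (card subnet_index)"
  have "(g (L, 1, 1, k))\<^sup>2 + (\<Sum>(l, i, j)\<in>subnet_index. (g (l, k, i, j))\<^sup>2)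
      \<le> 2 * N * c\<^sup>2 * ((u (L, 1, 1, k))\<^sup>2 + (subnet_dist k u)\<^sup>2)" if k: "k \<in> {1..K}" for k
  proof -
    let ?e = "c * (\<bar>u (L, 1, 1, k)\<bar> + subnet_dist k u)"
    have "(g (L, 1, 1, k))\<^sup>2 + (\<Sum>(l, i, j)\<in>subnet_index. (g (l, k, i, j))\<^sup>2)
        \<le> ?e\<^sup>2 + (\<Sum>(l, i, j)\<in>subnet_index. ?e\<^sup>2)"
      using outer[OF k] inner[OF k]
      by (intro add_mono sum_mono abs_le_imp_power2_le) (auto intro!: abs_le_imp_power2_le)
    also have "\<dots> = N * ?e\<^sup>2" by (simp add: N_def algebra_simps)
    also have "\<dots> \<le> N * (c\<^sup>2 * (2 * ((u (L, 1, 1, k))\<^sup>2 + (subnet_dist k u)\<^sup>2)))"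
    proof -
      have "(\<bar>u (L, 1, 1, k)\<bar> + subnet_dist k u)\<^sup>2 \<le> 2 * ((u (L, 1, 1, k))\<^sup>2 + (subnet_dist k u)\<^sup>2)"
        using power2_sum_le[of "\<bar>u (L, 1, 1, k)\<bar>" "subnet_dist k u"] by simp
      then show ?thesis
        unfolding power_mult_distrib by (rule mult_left_mono[OF mult_left_mono]) (simp_all add: N_def)
    qed
    also have "\<dots> = 2 * N * c\<^sup>2 * ((u (L, 1, 1, k))\<^sup>2 + (subnet_dist k u)\<^sup>2)"
      by (simp add: algebra_simps)
    finally show ?thesis .
  qed
  then have "(L2_set g (nn_index d r L K))\<^sup>2
      \<le> (\<Sum>k=1..K. 2 * N * c\<^sup>2 * ((u (L, 1, 1, k))\<^sup>2 + (subnet_dist k u)\<^sup>2))"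
    unfolding L2_set_power2 sum_nn_index by (rule sum_mono)
  also have "\<dots> = (sqrt (2 * N) * c * wnorm (nn_index d r L K) u)\<^sup>2"
    unfolding wnorm_power2 power_mult_distrib sum_distrib_left[symmetric] by (simp add: N_def)
  finally show ?thesis
    unfolding N_def by (rule power2_le_imp_le) (simp add: c wnorm_nonneg)
qed

lemma nn_f_bounded:
  assumes "\<And>k. k \<in> {1..K} \<Longrightarrow> \<bar>w (L, 1, 1, k)\<bar> \<le> \<gamma>"
  shows "\<bar>nn_f \<sigma> d r L K w x\<bar> \<le> real K * (\<gamma> * M)"
proof -
  have "\<bar>nn_f \<sigma> d r L K w x\<bar> \<le> (\<Sum>k=1..K. \<bar>w (L, 1, 1, k) * nn_input w x L k 1\<bar>)"
    unfolding nn_f_eq by (rule sum_abs)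
  also have "\<dots> \<le> (\<Sum>k=1..K. \<gamma> * M)"
    using assms nn_output_bounded by (intro sum_mono abs_mult_le) auto
  finally show ?thesis by simp
qed

lemma nn_f_diff_le:
  assumes "\<And>k. k \<in> {1..K} \<Longrightarrow> \<bar>w (L, 1, 1, k)\<bar> \<le> \<gamma>"
  shows "\<bar>nn_f \<sigma> d r L K w x - nn_f \<sigma> d r L K v x\<bar>
    \<le> real K * (2 * \<gamma> * M + M * wnorm (nn_index d r L K) (\<lambda>p. w p - v p))"
proof -
  let ?W = "wnorm (nn_index d r L K) (\<lambda>p. w p - v p)"
  have "\<bar>w (L, 1, 1, k) * nn_input w x L k 1 - v (L, 1, 1, k) * nn_input v x L k 1\<bar> \<le> \<gamma> * (2 * M) + ?W * M"
    if k: "k \<in> {1..K}" for k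
  proof -
    have "\<bar>nn_input w x L k 1 - nn_input v x L k 1\<bar> \<le> 2 * M"
      using nn_output_bounded[of w x k 1] nn_output_bounded[of v x k 1] by linarith
    moreover have "\<bar>w (L, 1, 1, k) - v (L, 1, 1, k)\<bar> \<le> ?W"
      using outer_le_wnorm[OF k, of "\<lambda>p. w p - v p"] by simp
    moreover have "w (L, 1, 1, k) * nn_input w x L k 1 - v (L, 1, 1, k) * nn_input v x L k 1
        = w (L, 1, 1, k) * (nn_input w x L k 1 - nn_input v x L k 1)
          + (w (L, 1, 1, k) - v (L, 1, 1, k)) * nn_input v x L k 1"
      by (simp add: algebra_simps)
    ultimately show ?thesis
      using assms[OF k] nn_output_bounded[of v x k 1]
      by (simp only:) (intro order_trans[OF abs_triangle_ineq] add_mono abs_mult_le)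
  qed
  then have "\<bar>\<Sum>k=1..K. w (L, 1, 1, k) * nn_input w x L k 1 - v (L, 1, 1, k) * nn_input v x L k 1\<bar>
      \<le> real K * (\<gamma> * (2 * M) + ?W * M)"
    by (rule abs_sum_le)
  then show ?thesis by (simp add: nn_f_eq sum_subtractf algebra_simps)
qed

definition weights_bounded :: "nat \<Rightarrow> real \<Rightarrow> real \<Rightarrow> weights \<Rightarrow> bool" where
  "weights_bounded K \<gamma> B w \<longleftrightarrow> (\<forall>k\<in>{1..K}. \<bar>w (L, 1, 1, k)\<bar> \<le> \<gamma> \<and> inner_bounded B k w)"

definition f_partial_lip_const :: real where
  "f_partial_lip_const = sqrt (2 * (1 + real (card subnet_index))) * (input_const L + input_partial_lip_const L)"

definition f_partial_bound_const :: real where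
  "f_partial_bound_const = sqrt (1 + real (card subnet_index)) * (M + input_const L)\<^sup>2"

lemma f_partial_lip_const_nonneg: "0 \<le> f_partial_lip_const"
  using input_const_nonneg[of L] input_partial_lip_const_nonneg[of L] by (simp add: f_partial_lip_const_def)

lemma f_partial_bound_const_nonneg: "0 \<le> f_partial_bound_const"
  by (simp add: f_partial_bound_const_def)

context
  fixes K :: nat and \<gamma> B \<alpha> :: real and x :: "nat \<Rightarrow> real"
  assumes \<gamma>: "1 \<le> \<gamma>" and B: "1 \<le> B" and \<alpha>: "1 \<le> \<alpha>" and x: "in_cube \<alpha> x"
begin

lemma nn_scale_ge_1: "1 \<le> \<gamma> * B ^ L * \<alpha>"
  using mult_ge1_I[OF \<gamma> one_le_power_mult[OF B \<alpha>]] by (simp add: mult.assoc)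

lemma nn_scale_le: "B ^ L * \<alpha> \<le> \<gamma> * B ^ (2 * L) * \<alpha>\<^sup>2"
proof -
  have "B ^ L * \<alpha> ^ 1 \<le> B ^ (2 * L) * \<alpha>\<^sup>2" by (rule power_mult_power_mono[OF B \<alpha>]) auto
  also have "\<dots> \<le> \<gamma> * (B ^ (2 * L) * \<alpha>\<^sup>2)" using mult_right_mono[OF \<gamma>, of "B ^ (2 * L) * \<alpha>\<^sup>2"] B by simp
  finally show ?thesis by (simp add: mult.assoc)
qed

lemma nn_f_lipschitz:
  assumes w1: "weights_bounded K \<gamma> B w1" and w2: "weights_bounded K \<gamma> B w2"
  shows "\<bar>nn_f \<sigma> d r L K w1 x - nn_f \<sigma> d r L K w2 x\<bar>
    \<le> real K * ((M + input_const L) * (\<gamma> * B ^ L * \<alpha>)) * wnorm (nn_index d r L K) (\<lambda>p. w1 p - w2 p)"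
proof -
  let ?u = "\<lambda>p. w1 p - w2 p" and ?R = "\<gamma> * B ^ L * \<alpha>"
  let ?W = "wnorm (nn_index d r L K) ?u"
  have "\<bar>w1 (L, 1, 1, k) * nn_input w1 x L k 1 - w2 (L, 1, 1, k) * nn_input w2 x L k 1\<bar>
      \<le> (M + input_const L) * ?R * ?W" if k: "k \<in> {1..K}" for k
  proof -
    have bounded: "inner_bounded B k w1" "inner_bounded B k w2" "\<bar>w2 (L, 1, 1, k)\<bar> \<le> \<gamma>"
      using w1 w2 k by (auto simp: weights_bounded_def)
    have "\<bar>(w1 (L, 1, 1, k) - w2 (L, 1, 1, k)) * nn_input w1 x L k 1\<bar> \<le> ?W * M"
      using outer_le_wnorm[OF k, of ?u] nn_output_bounded by (intro abs_mult_le) auto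
    also have "\<dots> \<le> M * ?R * ?W"
      using mult_left_mono[OF nn_scale_ge_1, of "M * ?W"] M_ge_1 wnorm_nonneg[of _ ?u] by (simp add: mult_ac)
    finally have outer: "\<bar>(w1 (L, 1, 1, k) - w2 (L, 1, 1, k)) * nn_input w1 x L k 1\<bar> \<le> M * ?R * ?W" .
    have "\<bar>w2 (L, 1, 1, k) * (nn_input w1 x L k 1 - nn_input w2 x L k 1)\<bar>
        \<le> \<gamma> * (input_const L * B ^ L * \<alpha> * subnet_dist k ?u)"
      using r_pos L_pos bounded
      by (intro abs_mult_le nn_input_lipschitz[OF B \<alpha> _ _ x abs_diff_le_subnet_dist]) (auto simp: width_def)
    also have "\<dots> \<le> input_const L * ?R * ?W"
    proof -
      have "0 \<le> input_const L * ?R" using input_const_nonneg[of L] nn_scale_ge_1 by simp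
      from mult_left_mono[OF subnet_dist_le_wnorm[OF k, of ?u] this] show ?thesis by (simp add: mult_ac)
    qed
    finally show ?thesis
      using outer unfolding mult_diff_mult by (intro order_trans[OF abs_triangle_ineq]) (simp add: algebra_simps)
  qed
  then have "\<bar>\<Sum>k=1..K. w1 (L, 1, 1, k) * nn_input w1 x L k 1 - w2 (L, 1, 1, k) * nn_input w2 x L k 1\<bar>
      \<le> real K * ((M + input_const L) * ?R * ?W)"
    by (rule abs_sum_le)
  then show ?thesis by (simp add: nn_f_eq sum_subtractf mult_ac)
qed

lemma nn_f_partial_bounded:
  assumes w: "weights_bounded K \<gamma> B w"
  shows "L2_set (\<lambda>p. nn_f_partial K w p x) (nn_index d r L K)
    \<le> sqrt (real K * (1 + real (card subnet_index))) * ((M + input_const L) * (\<gamma> * B ^ L * \<alpha>))"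
proof -
  let ?R = "\<gamma> * B ^ L * \<alpha>"
  have "\<bar>nn_f_partial K w p x\<bar> \<le> (M + input_const L) * ?R" if p: "p \<in> nn_index d r L K" for p
  proof -
    have MR: "M \<le> M * ?R" using nn_scale_ge_1 M_ge_1 by simp
    have "0 \<le> input_const L * ?R" using nn_scale_ge_1 input_const_nonneg[of L] by simp
    with MR M_ge_1 have M: "M \<le> (M + input_const L) * ?R" and c: "input_const L * ?R \<le> (M + input_const L) * ?R"
      unfolding distrib_right by linarith+
    from p consider k where "k \<in> {1..K}" "p = (L, 1, 1, k)"
      | k l i j where "k \<in> {1..K}" "(l, i, j) \<in> subnet_index" "p = (l, k, i, j)"
      unfolding nn_index_eq by auto
    then show ?thesis
    proof cases
      case 1
      then show ?thesis
        using nn_f_partial_outer[OF 1(1)] nn_output_bounded[of w x k 1] M by simp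
    next
      case (2 k l i j)
      have "\<bar>w (L, 1, 1, k) * nn_input_partial w p x L k 1\<bar> \<le> \<gamma> * (input_const L * B ^ L * \<alpha>)"
        using w 2(1) by (intro abs_mult_le nn_input_partial_bounded[OF B \<alpha> _ x _ one_in_width_L])
          (auto simp: weights_bounded_def)
      then show ?thesis
        using 2 c subnet_index_level by (simp add: nn_f_partial_inner mult_ac)
    qed
  qed
  then have "L2_set (\<lambda>p. nn_f_partial K w p x) (nn_index d r L K)
      \<le> sqrt (real (card (nn_index d r L K))) * ((M + input_const L) * ?R)"
    by (rule L2_set_le_const)
  then show ?thesis by (simp add: card_nn_index distrib_left)
qed

lemma nn_f_partial_outer_lipschitz:
  assumes w1: "weights_bounded K \<gamma> B w1" and w2: "weights_bounded K \<gamma> B w2" and k: "k \<in> {1..K}"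
  shows "\<bar>nn_f_partial K w1 (L, 1, 1, k) x - nn_f_partial K w2 (L, 1, 1, k) x\<bar>
    \<le> input_const L * B ^ L * \<alpha> * subnet_dist k (\<lambda>p. w1 p - w2 p)"
  unfolding nn_f_partial_outer[OF k] using w1 w2 k one_in_width_L
  by (intro nn_input_lipschitz[OF B \<alpha> _ _ x abs_diff_le_subnet_dist]) (auto simp: weights_bounded_def)

lemma nn_f_partial_inner_lipschitz:
  assumes w1: "weights_bounded K \<gamma> B w1" and w2: "weights_bounded K \<gamma> B w2" and k: "k \<in> {1..K}"
    and lij: "(l, i, j) \<in> subnet_index"
  shows "\<bar>nn_f_partial K w1 (l, k, i, j) x - nn_f_partial K w2 (l, k, i, j) x\<bar>
    \<le> input_const L * B ^ L * \<alpha> * \<bar>w1 (L, 1, 1, k) - w2 (L, 1, 1, k)\<bar>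
      + input_partial_lip_const L * (\<gamma> * B ^ (2 * L) * \<alpha>\<^sup>2) * subnet_dist k (\<lambda>p. w1 p - w2 p)"
proof -
  let ?p = "(l, k, i, j)"
  have bounded: "inner_bounded B k w1" "inner_bounded B k w2" "\<bar>w2 (L, 1, 1, k)\<bar> \<le> \<gamma>"
    using w1 w2 k by (auto simp: weights_bounded_def)
  have "\<bar>(w1 (L, 1, 1, k) - w2 (L, 1, 1, k)) * nn_input_partial w1 ?p x L k 1\<bar>
      \<le> \<bar>w1 (L, 1, 1, k) - w2 (L, 1, 1, k)\<bar> * (input_const L * B ^ L * \<alpha>)"
    using bounded one_in_width_L by (intro abs_mult_le nn_input_partial_bounded[OF B \<alpha> _ x]) auto
  moreover have "\<bar>w2 (L, 1, 1, k) * (nn_input_partial w1 ?p x L k 1 - nn_input_partial w2 ?p x L k 1)\<bar>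
      \<le> \<gamma> * (input_partial_lip_const L * B ^ (2 * L) * \<alpha>\<^sup>2 * subnet_dist k (\<lambda>p. w1 p - w2 p))"
    using bounded one_in_width_L
    by (intro abs_mult_le nn_input_partial_lipschitz[OF B \<alpha> _ _ x abs_diff_le_subnet_dist]) auto
  moreover have "nn_f_partial K w1 ?p x - nn_f_partial K w2 ?p x
      = (w1 (L, 1, 1, k) - w2 (L, 1, 1, k)) * nn_input_partial w1 ?p x L k 1
        + w2 (L, 1, 1, k) * (nn_input_partial w1 ?p x L k 1 - nn_input_partial w2 ?p x L k 1)"
    using k subnet_index_level[OF lij] by (simp add: nn_f_partial_inner mult_diff_mult)
  ultimately show ?thesis
    by (simp only:) (intro order_trans[OF abs_triangle_ineq] add_mono; simp add: mult_ac)
qed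

lemma nn_f_partial_lipschitz:
  assumes w1: "weights_bounded K \<gamma> B w1" and w2: "weights_bounded K \<gamma> B w2"
  shows "L2_set (\<lambda>p. nn_f_partial K w1 p x - nn_f_partial K w2 p x) (nn_index d r L K)
    \<le> f_partial_lip_const * (\<gamma> * B ^ (2 * L) * \<alpha>\<^sup>2) * wnorm (nn_index d r L K) (\<lambda>p. w1 p - w2 p)"
proof -
  let ?u = "\<lambda>p. w1 p - w2 p" and ?Q = "\<gamma> * B ^ (2 * L) * \<alpha>\<^sup>2"
  let ?c = "(input_const L + input_partial_lip_const L) * ?Q"
  have Q: "B ^ L * \<alpha> \<le> ?Q" by (rule nn_scale_le)
  have c_nonneg: "0 \<le> ?c"
    using Q one_le_power_mult[OF B \<alpha>, of L] input_const_nonneg input_partial_lip_const_nonneg by simp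
  have input: "input_const L * B ^ L * \<alpha> \<le> input_const L * ?Q"
    using mult_left_mono[OF Q input_const_nonneg] by (simp add: mult.assoc)
  have combine: "input_const L * B ^ L * \<alpha> * a + input_partial_lip_const L * ?Q * b \<le> ?c * (a + b)"
    if "0 \<le> a" "0 \<le> b" for a b
  proof -
    have "input_const L * B ^ L * \<alpha> * a \<le> input_const L * ?Q * a"
      using mult_right_mono[OF input that(1)] .
    moreover have "0 \<le> input_const L * ?Q * b" "0 \<le> input_partial_lip_const L * ?Q * a"
      using that c_nonneg input_const_nonneg[of L] input_partial_lip_const_nonneg[of L] Q
        one_le_power_mult[OF B \<alpha>, of L] by simp_all
    ultimately show ?thesis by (simp add: algebra_simps)
  qed
  have "L2_set (\<lambda>p. nn_f_partial K w1 p x - nn_f_partial K w2 p x) (nn_index d r L K)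
      \<le> sqrt (2 * (1 + real (card subnet_index))) * ?c * wnorm (nn_index d r L K) ?u"
  proof (rule L2_set_nn_index_le[OF c_nonneg])
    fix k assume k: "k \<in> {1..K}"
    let ?a = "\<bar>?u (L, 1, 1, k)\<bar>" and ?e = "subnet_dist k ?u"
    have "0 \<le> input_partial_lip_const L * ?Q * ?a"
      using c_nonneg input_partial_lip_const_nonneg[of L] Q one_le_power_mult[OF B \<alpha>, of L] by simp
    then have "input_const L * B ^ L * \<alpha> * ?e \<le> ?c * (?e + ?a)"
      using combine[of ?e ?a] subnet_dist_nonneg[of k ?u] by simp
    then show "\<bar>nn_f_partial K w1 (L, 1, 1, k) x - nn_f_partial K w2 (L, 1, 1, k) x\<bar> \<le> ?c * (?a + ?e)"
      using nn_f_partial_outer_lipschitz[OF w1 w2 k] by (simp add: add.commute)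
    fix l i j assume "(l, i, j) \<in> subnet_index"
    then show "\<bar>nn_f_partial K w1 (l, k, i, j) x - nn_f_partial K w2 (l, k, i, j) x\<bar> \<le> ?c * (?a + ?e)"
      using nn_f_partial_inner_lipschitz[OF w1 w2 k] combine[of ?a ?e] subnet_dist_nonneg[of k ?u]
      by (meson abs_ge_zero order_trans)
  qed
  then show ?thesis by (simp add: f_partial_lip_const_def mult_ac)
qed

lemma sample_grad_diff_le:
  assumes w1: "weights_bounded K \<gamma> B w1" and w2: "weights_bounded K \<gamma> B w2"
  shows "L2_set (\<lambda>p. (nn_f \<sigma> d r L K w1 x - y) * (nn_f_partial K w1 p x - nn_f_partial K w2 p x)
                     + (nn_f \<sigma> d r L K w1 x - nn_f \<sigma> d r L K w2 x) * nn_f_partial K w2 p x) (nn_index d r L K)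
    \<le> (\<bar>nn_f \<sigma> d r L K w1 x - y\<bar> * f_partial_lip_const * (\<gamma> * B ^ (2 * L) * \<alpha>\<^sup>2)
        + real K * sqrt (real K) * f_partial_bound_const * (\<gamma> * B ^ L * \<alpha>)\<^sup>2)
      * wnorm (nn_index d r L K) (\<lambda>p. w1 p - w2 p)"
proof -
  let ?I = "nn_index d r L K" and ?W = "wnorm (nn_index d r L K) (\<lambda>p. w1 p - w2 p)"
  let ?a = "nn_f \<sigma> d r L K w1 x - y" and ?b = "nn_f \<sigma> d r L K w1 x - nn_f \<sigma> d r L K w2 x"
  let ?R = "\<gamma> * B ^ L * \<alpha>" and ?N = "1 + real (card subnet_index)"
  have "L2_set (\<lambda>p. ?a * (nn_f_partial K w1 p x - nn_f_partial K w2 p x) + ?b * nn_f_partial K w2 p x) ?I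
      \<le> \<bar>?a\<bar> * L2_set (\<lambda>p. nn_f_partial K w1 p x - nn_f_partial K w2 p x) ?I
        + \<bar>?b\<bar> * L2_set (\<lambda>p. nn_f_partial K w2 p x) ?I"
    using L2_set_triangle_ineq[of "\<lambda>p. ?a * (nn_f_partial K w1 p x - nn_f_partial K w2 p x)"
        "\<lambda>p. ?b * nn_f_partial K w2 p x" ?I]
    by (simp add: L2_set_mult_left)
  also have "\<dots> \<le> \<bar>?a\<bar> * (f_partial_lip_const * (\<gamma> * B ^ (2 * L) * \<alpha>\<^sup>2) * ?W)
      + (real K * ((M + input_const L) * ?R) * ?W) * (sqrt (real K * ?N) * ((M + input_const L) * ?R))"
  proof (intro add_mono mult_left_mono mult_mono)
    show "L2_set (\<lambda>p. nn_f_partial K w1 p x - nn_f_partial K w2 p x) ?I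
        \<le> f_partial_lip_const * (\<gamma> * B ^ (2 * L) * \<alpha>\<^sup>2) * ?W"
      by (rule nn_f_partial_lipschitz[OF w1 w2])
    show "\<bar>?b\<bar> \<le> real K * ((M + input_const L) * ?R) * ?W" by (rule nn_f_lipschitz[OF w1 w2])
    show "L2_set (\<lambda>p. nn_f_partial K w2 p x) ?I \<le> sqrt (real K * ?N) * ((M + input_const L) * ?R)"
      by (rule nn_f_partial_bounded[OF w2])
    show "0 \<le> real K * ((M + input_const L) * ?R) * ?W"
      using M_ge_1 input_const_nonneg[of L] nn_scale_ge_1 wnorm_nonneg by simp
  qed simp_all
  also have "\<dots> = (\<bar>?a\<bar> * f_partial_lip_const * (\<gamma> * B ^ (2 * L) * \<alpha>\<^sup>2)
        + real K * sqrt (real K) * f_partial_bound_const * ?R\<^sup>2) * ?W"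
    unfolding f_partial_bound_const_def
    by (simp only: real_sqrt_mult) (simp add: power2_eq_square algebra_simps)
  finally show ?thesis .
qed

end

section \<open>Lipschitz continuity of the gradient of the empirical risk\<close>

lemma outer_sum_abs_le:
  fixes u :: weights
  shows "\<bar>\<Sum>j=1..K. of_bool (p = (L, 1, 1, j)) * u (L, 1, 1, j)\<bar> \<le> \<bar>u p\<bar>"
proof (cases "\<exists>j\<in>{1..K}. p = (L, 1, 1, j)")
  case True
  then obtain j0 where j0: "j0 \<in> {1..K}" "p = (L, 1, 1, j0)" by blast
  have "(\<Sum>j=1..K. of_bool (p = (L, 1, 1, j)) * u (L, 1, 1, j)) = (\<Sum>j=1..K. if j = j0 then u p else 0)"
    using j0(2) by (intro sum.cong) auto
  with j0(1) show ?thesis by simp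
next
  case False
  then have "(\<Sum>j=1..K. of_bool (p = (L, 1, 1, j)) * u (L, 1, 1, j)) = 0"
    by (intro sum.neutral) auto
  then show ?thesis by simp
qed

lemma Fn_grad_diff_le:
  assumes "0 \<le> c2"
  shows "wnorm (nn_index d r L K) (\<lambda>p. Fn_grad K c2 n X Y \<alpha> w1 p - Fn_grad K c2 n X Y \<alpha> w2 p)
    \<le> (1 / real n) * (\<Sum>i=1..n. 2 * of_bool (in_cube \<alpha> (X i)) *
          L2_set (\<lambda>p. (nn_f \<sigma> d r L K w1 (X i) - Y i) * (nn_f_partial K w1 p (X i) - nn_f_partial K w2 p (X i))
                      + (nn_f \<sigma> d r L K w1 (X i) - nn_f \<sigma> d r L K w2 (X i)) * nn_f_partial K w2 p (X i))
                 (nn_index d r L K))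
      + 2 * c2 * wnorm (nn_index d r L K) (\<lambda>p. w1 p - w2 p)"
proof -
  let ?I = "nn_index d r L K"
  define h where "h i p = (nn_f \<sigma> d r L K w1 (X i) - Y i) * (nn_f_partial K w1 p (X i) - nn_f_partial K w2 p (X i))
      + (nn_f \<sigma> d r L K w1 (X i) - nn_f \<sigma> d r L K w2 (X i)) * nn_f_partial K w2 p (X i)" for i p
  define pen where
    "pen (p :: weight_index) = (\<Sum>j=1..K. of_bool (p = (L, 1, 1, j)) * (w1 (L, 1, 1, j) - w2 (L, 1, 1, j)))" for p
  have ring: "(c * a1 + e * b1) - (c * a2 + e * b2) = c * (a1 - a2) + e * (b1 - b2)" for c e a1 a2 b1 b2 :: real
    by (simp add: algebra_simps)
  have "Fn_grad K c2 n X Y \<alpha> w1 p - Fn_grad K c2 n X Y \<alpha> w2 p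
      = (1 / real n) * (\<Sum>i=1..n. (2 * of_bool (in_cube \<alpha> (X i))) * h i p) + (2 * c2) * pen p" for p
    unfolding Fn_grad_def ring sum_subtractf[symmetric] h_def pen_def
    by (intro arg_cong2[where f = "\<lambda>a b. _ * a + _ * b"] sum.cong) (simp_all add: algebra_simps)
  then have "wnorm ?I (\<lambda>p. Fn_grad K c2 n X Y \<alpha> w1 p - Fn_grad K c2 n X Y \<alpha> w2 p)
      \<le> L2_set (\<lambda>p. (1 / real n) * (\<Sum>i=1..n. (2 * of_bool (in_cube \<alpha> (X i))) * h i p)) ?I
        + L2_set (\<lambda>p. (2 * c2) * pen p) ?I"
    unfolding wnorm_def L2_set_def[symmetric] by (simp add: L2_set_triangle_ineq)
  also have "\<dots> \<le> (1 / real n) * (\<Sum>i=1..n. 2 * of_bool (in_cube \<alpha> (X i)) * L2_set (h i) ?I)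
      + 2 * c2 * wnorm ?I (\<lambda>p. w1 p - w2 p)"
  proof (intro add_mono)
    show "L2_set (\<lambda>p. (1 / real n) * (\<Sum>i=1..n. (2 * of_bool (in_cube \<alpha> (X i))) * h i p)) ?I
        \<le> (1 / real n) * (\<Sum>i=1..n. 2 * of_bool (in_cube \<alpha> (X i)) * L2_set (h i) ?I)"
      unfolding L2_set_mult_left
      using L2_set_sum_le[of "{1..n}" "\<lambda>i p. (2 * of_bool (in_cube \<alpha> (X i))) * h i p" ?I]
      by (simp add: L2_set_mult_left divide_right_mono)
    have "L2_set pen ?I \<le> L2_set (\<lambda>p. \<bar>w1 p - w2 p\<bar>) ?I"
      unfolding pen_def by (rule L2_set_mono_abs) (rule outer_sum_abs_le[where u = "\<lambda>p. w1 p - w2 p"])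
    then show "L2_set (\<lambda>p. (2 * c2) * pen p) ?I \<le> 2 * c2 * wnorm ?I (\<lambda>p. w1 p - w2 p)"
      using assms by (simp add: L2_set_mult_left L2_set_abs wnorm_def L2_set_def[symmetric] mult_left_mono)
  qed
  finally show ?thesis unfolding h_def .
qed

lemma mean_residual_le:
  assumes "0 \<le> c2"
  shows "(1 / real n) * (\<Sum>i=1..n. of_bool (in_cube \<alpha> (X i)) * \<bar>nn_f \<sigma> d r L K w (X i) - Y i\<bar>)
    \<le> sqrt (Fn \<sigma> d r L K c2 n X Y \<alpha> w)"
proof -
  let ?e = "\<lambda>i. of_bool (in_cube \<alpha> (X i)) * \<bar>nn_f \<sigma> d r L K w (X i) - Y i\<bar>"
  have "(\<Sum>i=1..n. ?e i) / card {1..n} \<le> sqrt ((\<Sum>i=1..n. (?e i)\<^sup>2) / card {1..n})"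
    by (rule mean_le_sqrt_mean_squares)
  also have "(\<Sum>i=1..n. (?e i)\<^sup>2) / card {1..n} \<le> Fn \<sigma> d r L K c2 n X Y \<alpha> w"
  proof -
    have "0 \<le> c2 * (\<Sum>j=1..K. (w (L, 1, 1, j))\<^sup>2)" using assms by (simp add: sum_nonneg)
    moreover have "(?e i)\<^sup>2 = \<bar>nn_f \<sigma> d r L K w (X i) - Y i\<bar>\<^sup>2 * (if \<forall>j\<in>{1..d}. \<bar>X i j\<bar> \<le> \<alpha> then 1 else 0)" for i
      by (simp add: in_cube_def power_mult_distrib)
    ultimately show ?thesis by (simp add: Fn_def)
  qed
  finally show ?thesis by simp
qed

lemma residual_le:
  assumes "\<And>k. k \<in> {1..K} \<Longrightarrow> \<bar>w1 (L, 1, 1, k)\<bar> \<le> \<gamma>" and "\<And>k. k \<in> {1..K} \<Longrightarrow> \<bar>w2 (L, 1, 1, k)\<bar> \<le> \<gamma>"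
  shows "\<bar>nn_f \<sigma> d r L K w1 x - y\<bar>
    \<le> \<bar>nn_f \<sigma> d r L K v x - y\<bar> + real K * (4 * \<gamma> * M + M * wnorm (nn_index d r L K) (\<lambda>p. w2 p - v p))"
  using nn_f_bounded[of K w1 \<gamma> x, OF assms(1)] nn_f_bounded[of K w2 \<gamma> x, OF assms(2)]
    nn_f_diff_le[of K w2 \<gamma> x v, OF assms(2)]
  by (simp add: algebra_simps)

lemma mean_sample_grad_diff_le:
  assumes \<gamma>: "1 \<le> \<gamma>" and B: "1 \<le> B" and \<alpha>: "1 \<le> \<alpha>" and c2: "0 \<le> c2"
    and w1: "weights_bounded K \<gamma> B w1" and w2: "weights_bounded K \<gamma> B w2"
  shows "(1 / real n) * (\<Sum>i=1..n. 2 * of_bool (in_cube \<alpha> (X i)) *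
          L2_set (\<lambda>p. (nn_f \<sigma> d r L K w1 (X i) - Y i) * (nn_f_partial K w1 p (X i) - nn_f_partial K w2 p (X i))
                      + (nn_f \<sigma> d r L K w1 (X i) - nn_f \<sigma> d r L K w2 (X i)) * nn_f_partial K w2 p (X i))
                 (nn_index d r L K))
    \<le> 2 * ((sqrt (Fn \<sigma> d r L K c2 n X Y \<alpha> v)
              + real K * (4 * \<gamma> * M + M * wnorm (nn_index d r L K) (\<lambda>p. w2 p - v p)))
             * (f_partial_lip_const * (\<gamma> * B ^ (2 * L) * \<alpha>\<^sup>2))
           + real K * sqrt (real K) * f_partial_bound_const * (\<gamma> * B ^ L * \<alpha>)\<^sup>2)
      * wnorm (nn_index d r L K) (\<lambda>p. w1 p - w2 p)"
  (is "(1 / real n) * (\<Sum>i=1..n. 2 * ?ind i * ?h i) \<le> 2 * ((sqrt ?F + ?Kc) * ?c + ?D) * ?W")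
proof -
  let ?e = "\<lambda>i. \<bar>nn_f \<sigma> d r L K v (X i) - Y i\<bar>"
  have c: "0 \<le> ?c" using f_partial_lip_const_nonneg \<gamma> B by simp
  have Kc: "0 \<le> ?Kc" using \<gamma> M_ge_1 wnorm_nonneg by simp
  have per_sample: "2 * ?ind i * ?h i \<le> 2 * (?ind i * ?e i * ?c * ?W + (?Kc * ?c + ?D) * ?W)" for i
  proof (cases "in_cube \<alpha> (X i)")
    case True
    have "?h i \<le> (\<bar>nn_f \<sigma> d r L K w1 (X i) - Y i\<bar> * ?c + ?D) * ?W"
      using sample_grad_diff_le[OF \<gamma> B \<alpha> True w1 w2, of "Y i"] by (simp add: mult.assoc)
    also have "\<dots> \<le> ((?e i + ?Kc) * ?c + ?D) * ?W"
      using w1 w2 c wnorm_nonneg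
      by (intro mult_right_mono add_right_mono residual_le) (auto simp: weights_bounded_def)
    finally have "?h i \<le> ((?e i + ?Kc) * ?c + ?D) * ?W" .
    with True show ?thesis by (simp add: algebra_simps)
  next
    case False
    have "0 \<le> ?D" using f_partial_bound_const_nonneg by simp
    with False c Kc show ?thesis by (simp add: wnorm_nonneg)
  qed
  have "(1 / real n) * (\<Sum>i=1..n. 2 * ?ind i * ?h i)
      \<le> (1 / real n) * (\<Sum>i=1..n. 2 * (?ind i * ?e i * ?c * ?W + (?Kc * ?c + ?D) * ?W))"
    by (intro mult_left_mono sum_mono per_sample) simp
  also have "\<dots> = 2 * ?c * ?W * ((1 / real n) * (\<Sum>i=1..n. ?ind i * ?e i))
      + 2 * (?Kc * ?c + ?D) * ?W * (real n / real n)"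
    by (simp add: sum.distrib sum_distrib_left sum_divide_distrib algebra_simps del: sum_of_bool_mult_eq)
  also have "\<dots> \<le> 2 * ?c * ?W * sqrt ?F + 2 * (?Kc * ?c + ?D) * ?W * 1"
    using mean_residual_le[OF c2] c Kc wnorm_nonneg[of _ "\<lambda>p. w1 p - w2 p"] f_partial_bound_const_def
    by (intro add_mono mult_left_mono) auto
  finally show ?thesis by (simp add: algebra_simps)
qed

definition grad_const :: "real \<Rightarrow> real" where
  "grad_const c2 = 2 * (1 + 7 * M) * f_partial_lip_const + 2 * f_partial_bound_const + 2 * c2"

lemma grad_const_pos: "0 < c2 \<Longrightarrow> 0 < grad_const c2"
  using M_ge_1 mult_nonneg_nonneg[OF _ f_partial_lip_const_nonneg, of "1 + 7 * M"] f_partial_bound_const_nonneg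
  unfolding grad_const_def by (simp only: mult.assoc) linarith

lemma residual_scale_le:
  fixes \<kappa> \<gamma> T F s V :: real
  assumes "1 \<le> \<kappa>" "1 \<le> \<gamma>" "1 \<le> T" "s \<le> F" "1 \<le> F" "V \<le> 3 * T * F"
  shows "s + \<kappa> * (4 * \<gamma> * M + M * V) \<le> (1 + 7 * M) * (\<kappa> * \<gamma> * T * F)"
proof -
  let ?P = "\<kappa> * \<gamma> * T * F"
  have \<kappa>\<gamma>T: "1 \<le> \<kappa> * \<gamma> * T" and TF: "1 \<le> T * F" using mult_ge1_I assms by simp_all
  have "F \<le> ?P" using mult_left_mono[OF \<kappa>\<gamma>T, of F] assms(5) by (simp add: mult_ac)
  moreover have "\<kappa> * \<gamma> \<le> ?P"
    using mult_left_mono[OF TF, of "\<kappa> * \<gamma>"] assms(1,2) by (simp add: mult.assoc)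
  then have "M * (\<kappa> * \<gamma>) \<le> M * ?P" using M_ge_1 by simp
  moreover have "\<kappa> * V \<le> 3 * ?P"
  proof -
    have "\<kappa> * V \<le> \<kappa> * (3 * T * F)" using assms(1,6) by simp
    also have "\<dots> \<le> \<gamma> * (\<kappa> * (3 * T * F))" using assms by simp
    finally show ?thesis by (simp add: mult_ac)
  qed
  then have "M * (\<kappa> * V) \<le> M * (3 * ?P)" using M_ge_1 by simp
  moreover have "s + \<kappa> * (4 * \<gamma> * M + M * V) = s + 4 * (M * (\<kappa> * \<gamma>)) + M * (\<kappa> * V)"
    and "(1 + 7 * M) * ?P = ?P + 4 * (M * ?P) + M * (3 * ?P)"
    by (simp_all add: algebra_simps)
  ultimately show ?thesis using assms(4) by linarith
qed

lemma grad_scale_le: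
  fixes \<kappa> \<gamma> B \<alpha> T G s V W c2 :: real
  assumes \<kappa>: "1 \<le> \<kappa>" and \<gamma>: "1 \<le> \<gamma>" and B: "1 \<le> B" and \<alpha>: "1 \<le> \<alpha>" and T: "1 \<le> T"
    and G: "1 \<le> G" and s: "s \<le> G" and V: "V \<le> 3 * T * G" and W: "0 \<le> W" and c2: "0 < c2"
  shows "2 * ((s + \<kappa> * (4 * \<gamma> * M + M * V)) * (f_partial_lip_const * (\<gamma> * B ^ (2 * L) * \<alpha>\<^sup>2))
          + \<kappa> * sqrt \<kappa> * f_partial_bound_const * (\<gamma> * B ^ L * \<alpha>)\<^sup>2) * W + 2 * c2 * W
    \<le> grad_const c2 * (G * \<gamma>\<^sup>2 * B ^ (3 * L) * \<alpha> ^ 3 * (\<kappa> * sqrt \<kappa>) * T) * W"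
proof -
  let ?Q = "\<gamma> * B ^ (2 * L) * \<alpha>\<^sup>2" and ?R = "\<gamma> * B ^ L * \<alpha>"
  let ?Z = "G * \<gamma>\<^sup>2 * B ^ (3 * L) * \<alpha> ^ 3 * (\<kappa> * sqrt \<kappa>) * T"
  note scale = scale_monomials_le[OF \<kappa> \<gamma> B \<alpha> T G, of L]
  have "0 \<le> f_partial_lip_const * ?Q" using f_partial_lip_const_nonneg \<gamma> B by simp
  from mult_right_mono[OF residual_scale_le[OF \<kappa> \<gamma> T s G V] this]
  have "(s + \<kappa> * (4 * \<gamma> * M + M * V)) * (f_partial_lip_const * ?Q)
      \<le> (1 + 7 * M) * f_partial_lip_const * (?Q * (\<kappa> * \<gamma> * T * G))"
    by (simp only: mult_ac)
  also have "\<dots> \<le> (1 + 7 * M) * f_partial_lip_const * ?Z"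
    using scale(1) M_ge_1 f_partial_lip_const_nonneg by (intro mult_left_mono) simp_all
  finally have "(s + \<kappa> * (4 * \<gamma> * M + M * V)) * (f_partial_lip_const * ?Q)
      \<le> (1 + 7 * M) * f_partial_lip_const * ?Z" .
  moreover have "f_partial_bound_const * (\<kappa> * sqrt \<kappa> * ?R\<^sup>2) \<le> f_partial_bound_const * ?Z"
    using scale(2) f_partial_bound_const_nonneg by (rule mult_left_mono)
  moreover have "c2 \<le> c2 * ?Z" using scale(3) c2 by simp
  ultimately have "(s + \<kappa> * (4 * \<gamma> * M + M * V)) * (f_partial_lip_const * ?Q)
      + \<kappa> * sqrt \<kappa> * f_partial_bound_const * ?R\<^sup>2 + c2
      \<le> (1 + 7 * M) * f_partial_lip_const * ?Z + f_partial_bound_const * ?Z + c2 * ?Z"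
    by (simp add: mult_ac)
  from mult_right_mono[OF this, of "2 * W"] W show ?thesis
    by (simp add: grad_const_def algebra_simps)
qed

lemma Fn_grad_lipschitz:
  fixes Ln tn :: real
  assumes \<alpha>: "1 \<le> \<alpha>" and Ln: "0 < Ln" and tn: "Ln \<le> tn" and \<gamma>: "1 \<le> \<gamma>" and B: "1 \<le> B"
    and c2: "0 < c2" and w1: "weights_bounded K \<gamma> B w1" and w2: "weights_bounded K \<gamma> B w2"
    and v: "(wnorm (nn_index d r L K) (\<lambda>p. w2 p - v p))\<^sup>2
      \<le> 8 * (tn / Ln) * max (Fn \<sigma> d r L K c2 n X Y \<alpha> v) 1"
  shows "wnorm (nn_index d r L K)
      (\<lambda>p. wpartial (Fn \<sigma> d r L K c2 n X Y \<alpha>) w1 p - wpartial (Fn \<sigma> d r L K c2 n X Y \<alpha>) w2 p)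
    \<le> grad_const c2 * max (sqrt (Fn \<sigma> d r L K c2 n X Y \<alpha> v)) 1 * \<gamma>\<^sup>2 * B ^ (3 * L) * \<alpha> ^ 3
       * real K powr (3 / 2) * sqrt (tn / Ln) * wnorm (nn_index d r L K) (\<lambda>p. w1 p - w2 p)"
proof (cases "K = 0")
  case True
  then show ?thesis by (simp add: nn_index_eq wnorm_def)
next
  case False
  let ?F = "Fn \<sigma> d r L K c2 n X Y \<alpha> v" and ?I = "nn_index d r L K" and ?\<kappa> = "real K"
  have "wnorm ?I (\<lambda>p. wpartial (Fn \<sigma> d r L K c2 n X Y \<alpha>) w1 p - wpartial (Fn \<sigma> d r L K c2 n X Y \<alpha>) w2 p)
      \<le> 2 * ((sqrt ?F + ?\<kappa> * (4 * \<gamma> * M + M * wnorm ?I (\<lambda>p. w2 p - v p)))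
               * (f_partial_lip_const * (\<gamma> * B ^ (2 * L) * \<alpha>\<^sup>2))
            + ?\<kappa> * sqrt ?\<kappa> * f_partial_bound_const * (\<gamma> * B ^ L * \<alpha>)\<^sup>2) * wnorm ?I (\<lambda>p. w1 p - w2 p)
        + 2 * c2 * wnorm ?I (\<lambda>p. w1 p - w2 p)"
    unfolding wpartial_Fn using c2
    by (intro order_trans[OF Fn_grad_diff_le add_right_mono[OF mean_sample_grad_diff_le[OF \<gamma> B \<alpha> _ w1 w2]]])
      simp_all
  also have "\<dots> \<le> grad_const c2 * (max (sqrt ?F) 1 * \<gamma>\<^sup>2 * B ^ (3 * L) * \<alpha> ^ 3 * (?\<kappa> * sqrt ?\<kappa>) * sqrt (tn / Ln))
      * wnorm ?I (\<lambda>p. w1 p - w2 p)"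
  proof (rule grad_scale_le[OF _ \<gamma> B \<alpha> _ _ _ power2_le_imp_le_sqrt_max[OF _ v] wnorm_nonneg c2])
    show "1 \<le> ?\<kappa>" using False by simp
    show "1 \<le> sqrt (tn / Ln)" "0 \<le> tn / Ln" using Ln tn by simp_all
  qed simp_all
  also have "?\<kappa> * sqrt ?\<kappa> = real K powr (1 + 1 / 2)"
    using False by (subst powr_add) (simp add: powr_half_sqrt)
  finally show ?thesis by (simp add: mult_ac)
qed

end

lemma smooth_networkI:
  fixes \<sigma> :: "real \<Rightarrow> real" and r L :: nat and M D C :: real
  assumes "\<forall>x. \<bar>\<sigma> x\<bar> \<le> M" and "\<forall>x. \<sigma> differentiable (at x)"
    and "\<forall>x. \<bar>deriv \<sigma> x\<bar> \<le> D" and "\<forall>x y. \<bar>deriv \<sigma> x - deriv \<sigma> y\<bar> \<le> C * \<bar>x - y\<bar>"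
    and "1 \<le> r" and "1 \<le> L"
  shows "smooth_network \<sigma> r L (max M 1) (max D 1) (max C 0)"
proof
  show "\<bar>deriv \<sigma> x - deriv \<sigma> y\<bar> \<le> max C 0 * \<bar>x - y\<bar>" for x y
    using assms(4) mult_right_mono[of C "max C 0" "\<bar>x - y\<bar>"] by (meson abs_ge_zero max.cobounded1 order_trans)
qed (use assms DERIV_deriv_iff_real_differentiable in \<open>auto simp: le_max_iff_disj\<close>)

theorem lemma3:
  fixes \<sigma> :: "real \<Rightarrow> real" and d r L :: nat and c2 :: real
  assumes sigma_bounded: "\<exists>M. \<forall>x. \<bar>\<sigma> x\<bar> \<le> M"
    and sigma_diff: "\<forall>x. \<sigma> differentiable (at x)"
    and sigma_deriv_lip: "\<exists>C. \<forall>x y. \<bar>deriv \<sigma> x - deriv \<sigma> y\<bar> \<le> C * \<bar>x - y\<bar>"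
    and sigma_deriv_bounded: "\<exists>M. \<forall>x. \<bar>deriv \<sigma> x\<bar> \<le> M"
    and d_pos: "d \<ge> 1" and L_pos: "L \<ge> 1" and r_ge: "r \<ge> 2 * d" and c2_pos: "c2 > 0"
  shows "\<exists>c7 > 0. \<forall>(K::nat) (n::nat) (X :: nat \<Rightarrow> nat \<Rightarrow> real) (Y :: nat \<Rightarrow> real)
            (\<alpha>::real) (Ln::real) (tn::real) (\<gamma>::real) (B::real) (w1::weights) (w2::weights) (v::weights).
     \<alpha> \<ge> 1 \<longrightarrow> Ln > 0 \<longrightarrow> tn \<ge> Ln \<longrightarrow> \<gamma> \<ge> 1 \<longrightarrow> B \<ge> 1 \<longrightarrow>
     (\<forall>k\<in>{1..K}. max \<bar>w1 (L, 1, 1, k)\<bar> \<bar>w2 (L, 1, 1, k)\<bar> \<le> \<gamma>) \<longrightarrow>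
     (\<forall>l\<in>{1..L-1}. \<forall>k\<in>{1..K}. \<forall>i\<in>{1..r}. \<forall>j\<in>{0..r}.
         max \<bar>w1 (l, k, i, j)\<bar> \<bar>w2 (l, k, i, j)\<bar> \<le> B) \<longrightarrow>
     (wnorm (nn_index d r L K) (\<lambda>p. w2 p - v p))^2
        \<le> 8 * (tn / Ln) * max (Fn \<sigma> d r L K c2 n X Y \<alpha> v) 1 \<longrightarrow>
     wnorm (nn_index d r L K)
        (\<lambda>p. wpartial (Fn \<sigma> d r L K c2 n X Y \<alpha>) w1 p - wpartial (Fn \<sigma> d r L K c2 n X Y \<alpha>) w2 p)
       \<le> c7 * max (sqrt (Fn \<sigma> d r L K c2 n X Y \<alpha> v)) 1 * \<gamma>^2 * B^(3*L) * \<alpha>^3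
            * real K powr (3/2) * sqrt (tn / Ln) * wnorm (nn_index d r L K) (\<lambda>p. w1 p - w2 p)"
proof -
  obtain M D C where "\<forall>x. \<bar>\<sigma> x\<bar> \<le> M" and "\<forall>x. \<bar>deriv \<sigma> x\<bar> \<le> D"
    and "\<forall>x y. \<bar>deriv \<sigma> x - deriv \<sigma> y\<bar> \<le> C * \<bar>x - y\<bar>"
    using sigma_bounded sigma_deriv_bounded sigma_deriv_lip by blast
  then interpret smooth_network \<sigma> d r L "max M 1" "max D 1" "max C 0"
    using sigma_diff d_pos r_ge L_pos by (intro smooth_networkI) auto
  show ?thesis
    using grad_const_pos[OF c2_pos] Fn_grad_lipschitz[OF _ _ _ _ _ c2_pos]
    by (intro exI[of _ "grad_const c2"]) (auto simp: weights_bounded_def inner_bounded_def)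
qed

end
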